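(* Let $q\ge3$, $G\in\mathbb G^q$, $S=\Psi(G)$, and $c\in\{1,\dots,q\}$. If every connected component of $S_{\hat c}$ is a tree, then every connected component of the graph obtained from $G_{\hat 0}$ by deleting all color-$c$ edges (the $c$-residues of $G_{\hat 0}$) is a melonic graph with color set $\{1,\dots,q\}\setminus\{c\}$.
   Context: Fix an integer $q\ge 2$. A $(q+1)$-edge-colored graph (colored graph) is a finite connected graph, multiple edges allowed and no loops, whose edges carry colors in $\{0,1,\dots,q\}$ such that every vertex is incident to exactly one edge of each color. It is rooted if one color-0 edge is distinguished and oriented; it is bipartite if its vertices can be colored black and white so that every edge joins a black and a white vertex, with the convention that the origin of the root edge is black. $\mathbb G^q$ denotes the set of rooted bipartite colored graphs. $G_{\hat 0}$ denotes the graph obtained from $G$ by deleting all color-0 edges. Constellations: given $G\in\mathbb G^q$, its constellation $S=\Psi(G)$ is obtained as follows: orient every edge from its black to its white endpoint; contract every color-0 edge into a single vertex, called a white vertex of $S$. For each $i\in\{1,\dots,q\}$ the color-$i$ edges now form directed cycles; for each such cycle, passing through white vertices $w_1,\dots,w_p$ in this cyclic order, add a new vertex of color $i$ joined by one color-$i$ edge to each $w_k$, equip the new vertex with the cyclic order $(w_1,\dots,w_p)$ of its incident edges, and delete the original color-$i$ edges of the cycle. For $c\in\{1,\dots,q\}$, $S_{\hat c}$ is the graph obtained from $S$ by deleting all vertices of color $c$ and all edges of color $c$. Melonic graphs: for a color set $A$ with $|A|=k\ge2$, a melonic graph with colors $A$ is a graph obtained from the graph with two vertices joined by $k$ edges of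 all colors of $A$ by finitely many insertions, where an insertion picks an edge $\{u,v\}$ of some color $a\in A$, deletes it, adds two new vertices $x,y$ joined by $k-1$ edges of the colors $A\setminus\{a\}$, and adds color-$a$ edges $\{u,x\}$ and $\{y,v\}$. *)

theory Defs
  imports Main
begin

definition adj :: "'e set \<Rightarrow> ('e \<Rightarrow> 'v set) \<Rightarrow> ('v \<times> 'v) set" where
  "adj E ends = {(u, v). \<exists>e\<in>E. u \<in> ends e \<and> v \<in> ends e}"

definition connected_mg :: "'v set \<Rightarrow> 'e set \<Rightarrow> ('e \<Rightarrow> 'v set) \<Rightarrow> bool" where
  "connected_mg V E ends \<longleftrightarrow> V \<noteq> {} \<and> (\<forall>u\<in>V. \<forall>v\<in>V. (u, v) \<in> (adj E ends)\<^sup>*)"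

definition has_cycle :: "'v set \<Rightarrow> 'e set \<Rightarrow> ('e \<Rightarrow> 'v set) \<Rightarrow> bool" where
  "has_cycle V E ends \<longleftrightarrow> (\<exists>vs es. length vs = length es \<and> length es \<ge> 1 \<and>
      distinct vs \<and> distinct es \<and> set vs \<subseteq> V \<and> set es \<subseteq> E \<and>
      (\<forall>k < length es. ends (es ! k) = {vs ! k, vs ! ((k + 1) mod length es)}))"

definition is_tree :: "'v set \<Rightarrow> 'e set \<Rightarrow> ('e \<Rightarrow> 'v set) \<Rightarrow> bool" where
  "is_tree V E ends \<longleftrightarrow> connected_mg V E ends \<and> \<not> has_cycle V E ends"

definition component :: "'v set \<Rightarrow> 'e set \<Rightarrow> ('e \<Rightarrow> 'v set) \<Rightarrow> 'v \<Rightarrow> 'v set" where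
  "component V E ends v = {u \<in> V. (v, u) \<in> (adj {e\<in>E. ends e \<subseteq> V} ends)\<^sup>*}"

definition edges_within :: "'e set \<Rightarrow> ('e \<Rightarrow> 'v set) \<Rightarrow> 'v set \<Rightarrow> 'e set" where
  "edges_within E ends C = {e \<in> E. ends e \<subseteq> C}"

definition all_components_trees :: "'v set \<Rightarrow> 'e set \<Rightarrow> ('e \<Rightarrow> 'v set) \<Rightarrow> bool" where
  "all_components_trees V E ends \<longleftrightarrow>
     (\<forall>v\<in>V. is_tree (component V E ends v) (edges_within E ends (component V E ends v)) ends)"

definition colored_graph :: "nat \<Rightarrow> 'v set \<Rightarrow> 'e set \<Rightarrow> ('e \<Rightarrow> 'v set) \<Rightarrow> ('e \<Rightarrow> nat) \<Rightarrow> bool" where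
  "colored_graph q V E ends col \<longleftrightarrow>
     finite V \<and> finite E \<and>
     (\<forall>e\<in>E. \<exists>u v. u \<in> V \<and> v \<in> V \<and> u \<noteq> v \<and> ends e = {u, v}) \<and>
     (\<forall>e\<in>E. col e \<le> q) \<and>
     (\<forall>v\<in>V. \<forall>i\<le>q. \<exists>!e. e \<in> E \<and> col e = i \<and> v \<in> ends e) \<and>
     connected_mg V E ends"

text \<open>Rooted (root edge r of colour 0, oriented with origin ro) and bipartite with
  black/white colouring blk (True = black), origin of the root black.\<close>
definition rooted_bipartite_colored_graph ::
  "nat \<Rightarrow> 'v set \<Rightarrow> 'e set \<Rightarrow> ('e \<Rightarrow> 'v set) \<Rightarrow> ('e \<Rightarrow> nat) \<Rightarrow> 'e \<Rightarrow> 'v \<Rightarrow> ('v \<Rightarrow> bool) \<Rightarrow> bool" where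
  "rooted_bipartite_colored_graph q V E ends col r ro blk \<longleftrightarrow>
     colored_graph q V E ends col \<and> r \<in> E \<and> col r = 0 \<and> ro \<in> ends r \<and>
     (\<forall>e\<in>E. \<exists>b w. ends e = {b, w} \<and> blk b \<and> \<not> blk w) \<and> blk ro"

definition edge_at :: "'e set \<Rightarrow> ('e \<Rightarrow> 'v set) \<Rightarrow> ('e \<Rightarrow> nat) \<Rightarrow> 'v \<Rightarrow> nat \<Rightarrow> 'e" where
  "edge_at E ends col v i = (THE e. e \<in> E \<and> col e = i \<and> v \<in> ends e)"

definition black_end :: "('e \<Rightarrow> 'v set) \<Rightarrow> ('v \<Rightarrow> bool) \<Rightarrow> 'e \<Rightarrow> 'v" where
  "black_end ends blk e = (THE v. v \<in> ends e \<and> blk v)"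

definition white_end :: "('e \<Rightarrow> 'v set) \<Rightarrow> ('v \<Rightarrow> bool) \<Rightarrow> 'e \<Rightarrow> 'v" where
  "white_end ends blk e = (THE v. v \<in> ends e \<and> \<not> blk v)"

text \<open>After contracting colour-0 edges, a white vertex of S is a colour-0 edge e0 of G.
  The (black-to-white oriented) colour-i edge leaving the contracted vertex e0 ends in the
  contracted vertex psi_succ i e0. The directed colour-i cycles are the orbits of this map.\<close>
definition psi_succ :: "'e set \<Rightarrow> ('e \<Rightarrow> 'v set) \<Rightarrow> ('e \<Rightarrow> nat) \<Rightarrow> ('v \<Rightarrow> bool) \<Rightarrow> nat \<Rightarrow> 'e \<Rightarrow> 'e" where
  "psi_succ E ends col blk i e0 =
     edge_at E ends col (white_end ends blk (edge_at E ends col (black_end ends blk e0) i)) 0"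

definition psi_cycle :: "'e set \<Rightarrow> ('e \<Rightarrow> 'v set) \<Rightarrow> ('e \<Rightarrow> nat) \<Rightarrow> ('v \<Rightarrow> bool) \<Rightarrow> nat \<Rightarrow> 'e \<Rightarrow> 'e set" where
  "psi_cycle E ends col blk i e0 = {(psi_succ E ends col blk i ^^ n) e0 | n. True}"

text \<open>Vertices of S: Inl e0 (white vertices = colour-0 edges of G) and Inr (i, C)
  (the colour-i vertex created for the colour-i cycle C). Edges of S: (e0, i), the
  colour-i edge joining the white vertex e0 to the vertex of its colour-i cycle.\<close>
definition psiV :: "nat \<Rightarrow> 'e set \<Rightarrow> ('e \<Rightarrow> 'v set) \<Rightarrow> ('e \<Rightarrow> nat) \<Rightarrow> ('v \<Rightarrow> bool) \<Rightarrow> ('e + nat \<times> 'e set) set" where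
  "psiV q E ends col blk =
     Inl ` {e \<in> E. col e = 0} \<union>
     {Inr (i, psi_cycle E ends col blk i e0) | i e0. i \<in> {1..q} \<and> e0 \<in> E \<and> col e0 = 0}"

definition psiE :: "nat \<Rightarrow> 'e set \<Rightarrow> ('e \<Rightarrow> nat) \<Rightarrow> ('e \<times> nat) set" where
  "psiE q E col = {(e0, i). e0 \<in> E \<and> col e0 = 0 \<and> i \<in> {1..q}}"

definition psi_ends :: "'e set \<Rightarrow> ('e \<Rightarrow> 'v set) \<Rightarrow> ('e \<Rightarrow> nat) \<Rightarrow> ('v \<Rightarrow> bool) \<Rightarrow> 'e \<times> nat \<Rightarrow> ('e + nat \<times> 'e set) set" where
  "psi_ends E ends col blk = (\<lambda>(e0, i). {Inl e0, Inr (i, psi_cycle E ends col blk i e0)})"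

fun psi_vcol :: "'e + nat \<times> 'e set \<Rightarrow> nat" where
  "psi_vcol (Inl _) = 0"
| "psi_vcol (Inr (i, _)) = i"

fun psi_ecol :: "'e \<times> nat \<Rightarrow> nat" where
  "psi_ecol (_, i) = i"

definition psiV_hat :: "nat \<Rightarrow> nat \<Rightarrow> 'e set \<Rightarrow> ('e \<Rightarrow> 'v set) \<Rightarrow> ('e \<Rightarrow> nat) \<Rightarrow> ('v \<Rightarrow> bool) \<Rightarrow> ('e + nat \<times> 'e set) set" where
  "psiV_hat q c E ends col blk = {x \<in> psiV q E ends col blk. psi_vcol x \<noteq> c}"

definition psiE_hat :: "nat \<Rightarrow> nat \<Rightarrow> 'e set \<Rightarrow> ('e \<Rightarrow> nat) \<Rightarrow> ('e \<times> nat) set" where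
  "psiE_hat q c E col = {x \<in> psiE q E col. psi_ecol x \<noteq> c}"

text \<open>Melonic graphs with colour set A, generated on concrete carriers (nat vertices, nat edges).\<close>
inductive melonic_gen :: "nat set \<Rightarrow> nat set \<Rightarrow> nat set \<Rightarrow> (nat \<Rightarrow> nat set) \<Rightarrow> (nat \<Rightarrow> nat) \<Rightarrow> bool"
  for A :: "nat set" where
  base: "\<lbrakk> finite A; card A \<ge> 2; x \<noteq> y; finite E; bij_betw col E A; \<forall>e\<in>E. ends e = {x, y} \<rbrakk>
     \<Longrightarrow> melonic_gen A {x, y} E ends col"
| insert: "\<lbrakk> melonic_gen A V E ends col; e \<in> E; col e = a; ends e = {u, v};
      x \<notin> V; y \<notin> V; x \<noteq> y;
      finite F; F \<inter> E = {}; e1 \<notin> E \<union> F; e2 \<notin> E \<union> F; e1 \<noteq> e2;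
      bij_betw col' F (A - {a}); \<forall>f\<in>F. ends' f = {x, y};
      ends' e1 = {u, x}; ends' e2 = {y, v}; col' e1 = a; col' e2 = a;
      \<forall>g\<in>E - {e}. ends' g = ends g \<and> col' g = col g \<rbrakk>
     \<Longrightarrow> melonic_gen A (V \<union> {x, y}) ((E - {e}) \<union> F \<union> {e1, e2}) ends' col'"

definition colored_iso ::
  "'v1 set \<Rightarrow> 'e1 set \<Rightarrow> ('e1 \<Rightarrow> 'v1 set) \<Rightarrow> ('e1 \<Rightarrow> nat) \<Rightarrow>
   'v2 set \<Rightarrow> 'e2 set \<Rightarrow> ('e2 \<Rightarrow> 'v2 set) \<Rightarrow> ('e2 \<Rightarrow> nat) \<Rightarrow> bool" where
  "colored_iso V1 E1 ends1 col1 V2 E2 ends2 col2 \<longleftrightarrow>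
     (\<exists>\<phi> \<psi>. bij_betw \<phi> V1 V2 \<and> bij_betw \<psi> E1 E2 \<and>
        (\<forall>e\<in>E1. ends2 (\<psi> e) = \<phi> ` ends1 e \<and> col2 (\<psi> e) = col1 e))"

definition melonic :: "nat set \<Rightarrow> 'v set \<Rightarrow> 'e set \<Rightarrow> ('e \<Rightarrow> 'v set) \<Rightarrow> ('e \<Rightarrow> nat) \<Rightarrow> bool" where
  "melonic A V E ends col \<longleftrightarrow>
     (\<exists>V' E' ends' col'. melonic_gen A V' E' ends' col' \<and> colored_iso V E ends col V' E' ends' col')"

end

theory Submission
  imports Defs
begin

text \<open>Encode the graph by the involutions m k (the neighbour along colour k) and the
  bipartition. With A = {1..q} - {c}, the constellation with colour c removed becomes the
  bipartite graph between the black vertices, standing for the colour-0 edges, and the orbits of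
  m 0 \<circ> m i for i \<in> A. If this graph is a forest, some black vertex b differs from w = m 0 b
  in at most one colour a of A; otherwise the black vertices and the non-trivial cycles would
  span a subgraph of minimum degree two. Either b and w are joined by all colours of A, and then
  they form a melon which is a whole residue, or \<open>{b, w}\<close> is an elementary melon inserted on the
  colour-a edge between m a b and m a w. Deleting b and w and reconnecting that edge keeps the
  constellation acyclic, as its cycles only lose the vertex b, shrinks the residue of b by
  \<open>{b, w}\<close> and leaves the other residues unchanged, so induction on the number of vertices
  shows that every A-residue is melonic.\<close>

section \<open>Cycles in multigraphs\<close>

lemma has_cycle_mono:
  assumes "has_cycle V1 E1 ends" "V1 \<subseteq> V2" "E1 \<subseteq> E2"
  shows "has_cycle V2 E2 ends"
  using assms unfolding has_cycle_def by blast

lemma has_cycle_image: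
  assumes "has_cycle V1 E1 ends1" "inj_on h V1" "inj_on g E1" "h ` V1 \<subseteq> V2" "g ` E1 \<subseteq> E2"
    and "\<forall>e\<in>E1. ends2 (g e) = h ` ends1 e"
  shows "has_cycle V2 E2 ends2"
proof -
  obtain vs es where c: "length vs = length es" "length es \<ge> 1"
      "distinct vs" "distinct es" "set vs \<subseteq> V1" "set es \<subseteq> E1"
      "\<forall>k < length es. ends1 (es ! k) = {vs ! k, vs ! ((k + 1) mod length es)}"
    using assms(1) unfolding has_cycle_def by blast
  have "distinct (map h vs)" "distinct (map g es)"
    using c assms(2,3) by (simp_all add: distinct_map inj_on_subset)
  moreover have "ends2 (map g es ! k) = {map h vs ! k, map h vs ! ((k + 1) mod length es)}"
    if k: "k < length es" for k
  proof -
    have "(k + 1) mod length es < length vs" "es ! k \<in> E1" using c k by (auto simp: Suc_le_eq)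
    then show ?thesis using c k assms(6) by simp
  qed
  ultimately show ?thesis
    unfolding has_cycle_def using c assms(4,5)
    by (intro exI[of _ "map h vs"] exI[of _ "map g es"]) (auto simp: image_subset_iff)
qed

lemma has_cycle_imp_not_all_components_trees:
  assumes "has_cycle V E ends" "\<forall>e\<in>E. ends e \<subseteq> V"
  shows "\<not> all_components_trees V E ends"
proof -
  obtain vs es where c: "length vs = length es" "length es \<ge> 1"
      "distinct vs" "distinct es" "set vs \<subseteq> V" "set es \<subseteq> E"
      "\<forall>k < length es. ends (es ! k) = {vs ! k, vs ! ((k + 1) mod length es)}"
    using assms(1) unfolding has_cycle_def by blast
  define C where "C = component V E ends (vs ! 0)"
  have reach: "(vs ! 0, vs ! k) \<in> (adj {e\<in>E. ends e \<subseteq> V} ends)\<^sup>*" if "k < length vs" for k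
    using that
  proof (induction k)
    case (Suc k)
    then have "ends (es ! k) = {vs ! k, vs ! Suc k}" "es ! k \<in> E" using c by auto
    then have "(vs ! k, vs ! Suc k) \<in> adj {e\<in>E. ends e \<subseteq> V} ends"
      unfolding adj_def using assms(2) by blast
    then show ?case using Suc by (meson Suc_lessD rtrancl.rtrancl_into_rtrancl)
  qed simp
  have vsC: "set vs \<subseteq> C"
    unfolding C_def component_def using reach c by (auto simp: in_set_conv_nth)
  have "ends e \<subseteq> C" if e: "e \<in> set es" for e
  proof -
    obtain k where k: "k < length es" "e = es ! k" using e by (auto simp: in_set_conv_nth)
    have "(k + 1) mod length es < length vs" using c k by (simp add: Suc_le_eq)
    then show ?thesis using c k vsC by auto
  qed
  then have "set es \<subseteq> edges_within E ends C" unfolding edges_within_def using c by auto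
  then have "has_cycle C (edges_within E ends C) ends"
    unfolding has_cycle_def using c vsC by blast
  moreover have "vs ! 0 \<in> V" using c by (auto simp: Suc_le_eq)
  ultimately show ?thesis unfolding all_components_trees_def is_tree_def C_def by blast
qed

lemma cyclic_neighbours_eq_imp_eq:
  assumes "distinct vs" "3 \<le> length vs" "s < length vs" "t < length vs"
    and "{vs ! s, vs ! ((s + 1) mod length vs)} = {vs ! t, vs ! ((t + 1) mod length vs)}"
  shows "s = t"
proof (rule ccontr)
  let ?L = "length vs"
  assume "s \<noteq> t"
  have inj: "i = j" if "i < ?L" "j < ?L" "vs ! i = vs ! j" for i j
    using that assms(1) by (simp add: nth_eq_iff_index_eq)
  have "0 < ?L" using assms(2) by linarith
  then have "(s + 1) mod ?L < ?L" "(t + 1) mod ?L < ?L" by simp_all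
  moreover have "vs ! s \<noteq> vs ! t" using inj assms(3,4) \<open>s \<noteq> t\<close> by blast
  ultimately have "s = (t + 1) mod ?L" "(s + 1) mod ?L = t"
    using assms(3-5) inj by (auto simp: doubleton_eq_iff)
  then show False using assms(2-4) \<open>s \<noteq> t\<close> by (auto simp: mod_Suc split: if_splits)
qed

definition simple_path :: "'e set \<Rightarrow> ('e \<Rightarrow> 'v set) \<Rightarrow> 'v list \<Rightarrow> bool" where
  "simple_path E ends p \<longleftrightarrow> distinct p \<and> (\<forall>j. Suc j < length p \<longrightarrow> (\<exists>e\<in>E. ends e = {p ! j, p ! Suc j}))"

lemma has_cycle_if_path_closes:
  assumes p: "simple_path E ends p" "set p \<subseteq> V"
    and j: "2 \<le> j" "j < length p" and e: "e \<in> E" "ends e = {p ! 0, p ! j}"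
  shows "has_cycle V E ends"
proof -
  define vs where "vs = take (Suc j) p"
  define step where "step t = (SOME e. e \<in> E \<and> ends e = {p ! t, p ! Suc t})" for t
  define es where "es = map step [0..<j] @ [e]"
  have step: "step t \<in> E \<and> ends (step t) = {p ! t, p ! Suc t}" if "t < j" for t
  proof -
    have "Suc t < length p" using that j by simp
    then have "\<exists>e. e \<in> E \<and> ends e = {p ! t, p ! Suc t}"
      using p(1) unfolding simple_path_def by blast
    then show ?thesis unfolding step_def by (rule someI_ex)
  qed
  have len: "length vs = Suc j" "length es = Suc j" using j unfolding vs_def es_def by auto
  have dvs: "distinct vs" using p(1) unfolding vs_def simple_path_def by simp
  have ends_es: "ends (es ! k) = {vs ! k, vs ! ((k + 1) mod Suc j)}" if k: "k < Suc j" for k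
  proof (cases "k < j")
    case True
    then show ?thesis using step[OF True] unfolding vs_def es_def by (simp add: nth_append)
  next
    case False
    then have "k = j" using k by simp
    then show ?thesis using e unfolding vs_def es_def by (simp add: nth_append insert_commute)
  qed
  have "distinct es"
    unfolding distinct_conv_nth
  proof (intro allI impI)
    fix s t assume st: "s < length es" "t < length es" "s \<noteq> t"
    show "es ! s \<noteq> es ! t"
    proof
      assume "es ! s = es ! t"
      then have "{vs ! s, vs ! ((s + 1) mod Suc j)} = {vs ! t, vs ! ((t + 1) mod Suc j)}"
        using ends_es st len by metis
      then have "s = t"
        using cyclic_neighbours_eq_imp_eq[OF dvs] st len j by simp
      with st show False by simp
    qed
  qed
  moreover have "set vs \<subseteq> V" "set es \<subseteq> E"
    using p(2) step e set_take_subset[of "Suc j" p] unfolding vs_def es_def by auto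
  ultimately show ?thesis
    unfolding has_cycle_def using len dvs ends_es by (intro exI[of _ vs] exI[of _ es]) auto
qed

definition two_neighbours_within :: "'e set \<Rightarrow> ('e \<Rightarrow> 'v set) \<Rightarrow> 'v set \<Rightarrow> 'v \<Rightarrow> bool" where
  "two_neighbours_within E ends X x \<longleftrightarrow> (\<exists>e1 e2 y1 y2. e1 \<in> E \<and> e2 \<in> E \<and> y1 \<in> X \<and> y2 \<in> X \<and>
     y1 \<noteq> y2 \<and> y1 \<noteq> x \<and> y2 \<noteq> x \<and> ends e1 = {x, y1} \<and> ends e2 = {x, y2})"

text \<open>A longest simple path in X cannot be extended at its first vertex, so a second
  neighbour of that vertex lies further along the path and closes a cycle.\<close>
lemma has_cycle_if_min_degree_two:
  assumes "finite X" "X \<noteq> {}" "X \<subseteq> V" and deg: "\<forall>x\<in>X. two_neighbours_within E ends X x"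
  shows "has_cycle V E ends"
proof -
  let ?path = "\<lambda>p. p \<noteq> [] \<and> set p \<subseteq> X \<and> simple_path E ends p"
  obtain x0 where "x0 \<in> X" using assms(2) by blast
  then have "?path [x0]" by (simp add: simple_path_def)
  moreover have "length p < card X + 1" if "?path p" for p
    using that card_mono[OF assms(1), of "set p"] distinct_card[of p] by (simp add: simple_path_def)
  ultimately obtain p where p: "?path p" and longest: "\<And>p'. ?path p' \<Longrightarrow> length p' \<le> length p"
    using ex_has_greatest_nat[of ?path "[x0]" length "card X + 1"] by blast
  have "p ! 0 \<in> X" using p by (simp add: subset_iff)
  then obtain e y where e: "e \<in> E" "y \<in> X" "y \<noteq> p ! 0" "ends e = {p ! 0, y}"
      and y: "2 \<le> length p \<Longrightarrow> y \<noteq> p ! 1"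
    using deg unfolding two_neighbours_within_def by (metis One_nat_def)
  have "y \<in> set p"
  proof (rule ccontr)
    assume "y \<notin> set p"
    then have "?path (y # p)"
      using p e unfolding simple_path_def
      by (auto simp: nth_Cons insert_commute split: nat.splits)
    then show False using longest by fastforce
  qed
  then obtain j where j: "j < length p" "p ! j = y" by (auto simp: in_set_conv_nth)
  moreover have "j \<noteq> 0" using j e(3) by (metis gr0I)
  moreover have "j \<noteq> 1" using j y by fastforce
  ultimately show ?thesis
    using has_cycle_if_path_closes[of E ends p V j e] p e assms(3) by auto
qed

section \<open>Forward orbits\<close>

definition forward_orbit :: "('a \<Rightarrow> 'a) \<Rightarrow> 'a \<Rightarrow> 'a set" where
  "forward_orbit f x = {(f ^^ n) x | n. True}"

lemma forward_orbit_self: "x \<in> forward_orbit f x"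
  unfolding forward_orbit_def by (auto intro: exI[of _ 0])

lemma forward_orbit_step: "y \<in> forward_orbit f x \<Longrightarrow> f y \<in> forward_orbit f x"
  unfolding forward_orbit_def by (auto intro: exI[of _ "Suc n" for n])

lemma forward_orbit_trans: "y \<in> forward_orbit f x \<Longrightarrow> forward_orbit f y \<subseteq> forward_orbit f x"
  unfolding forward_orbit_def by auto (metis comp_apply funpow_add)

lemma forward_orbit_subset: "\<forall>z\<in>B. f z \<in> B \<Longrightarrow> x \<in> B \<Longrightarrow> forward_orbit f x \<subseteq> B"
proof -
  assume "\<forall>z\<in>B. f z \<in> B" "x \<in> B"
  then have "(f ^^ n) x \<in> B" for n by (induction n) auto
  then show ?thesis unfolding forward_orbit_def by auto
qed

lemma funpow_periodic_mult: "(f ^^ n) x = x \<Longrightarrow> (f ^^ (n * k)) x = x"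
  unfolding funpow_mult[symmetric] by (induction k) auto

lemma funpow_returns_if_inj_on:
  assumes "finite B" "inj_on f B" "\<forall>z\<in>B. f z \<in> B" "x \<in> B"
  obtains n where "n > 0" "(f ^^ n) x = x"
proof -
  have inB: "(f ^^ n) x \<in> B" for n by (induction n) (use assms(3,4) in auto)
  have "\<not> inj_on (\<lambda>n. (f ^^ n) x) {..card B}"
  proof
    assume "inj_on (\<lambda>n. (f ^^ n) x) {..card B}"
    then have "card ((\<lambda>n. (f ^^ n) x) ` {..card B}) = card B + 1" by (simp add: card_image)
    moreover have "card ((\<lambda>n. (f ^^ n) x) ` {..card B}) \<le> card B"
      using inB assms(1) by (intro card_mono) auto
    ultimately show False by simp
  qed
  then obtain i j where ij: "(f ^^ i) x = (f ^^ (i + j)) x" "j > 0"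
    unfolding inj_on_def by (metis linorder_neqE_nat less_imp_add_positive)
  have "(f ^^ j) x = x"
    using ij(1)
  proof (induction i)
    case (Suc i)
    then have "f ((f ^^ i) x) = f ((f ^^ (i + j)) x)" by simp
    then show ?case using Suc inB assms(2) by (meson inj_onD)
  qed simp
  then show ?thesis using that ij(2) by blast
qed

lemma forward_orbit_sym:
  assumes "finite B" "inj_on f B" "\<forall>z\<in>B. f z \<in> B" "x \<in> B" "y \<in> forward_orbit f x"
  shows "x \<in> forward_orbit f y"
proof -
  obtain k where k: "y = (f ^^ k) x" using assms(5) unfolding forward_orbit_def by blast
  obtain n where n: "n > 0" "(f ^^ n) x = x" using funpow_returns_if_inj_on[OF assms(1-4)] by blast
  have "(f ^^ (n * k - k)) y = (f ^^ (n * k - k + k)) x"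
    unfolding k by (simp add: funpow_add[unfolded comp_def])
  also have "\<dots> = x" using n by (simp add: funpow_periodic_mult)
  finally show ?thesis unfolding forward_orbit_def by blast
qed

lemma forward_orbit_eq:
  assumes "finite B" "inj_on f B" "\<forall>z\<in>B. f z \<in> B" "x \<in> B" "y \<in> forward_orbit f x"
  shows "forward_orbit f y = forward_orbit f x"
  using forward_orbit_trans[OF assms(5)] forward_orbit_trans[OF forward_orbit_sym[OF assms]] by blast

text \<open>If the orbit of f passes through b \<notin> B only via v \<mapsto> b \<mapsto> f b, then short-cutting
  v \<mapsto> f b yields the same orbits with b removed.\<close>
lemma forward_orbit_bypass:
  assumes "b \<notin> B" "v \<in> B" "f v = b" "f b \<in> B" "g v = f b"
    and "\<forall>z\<in>B. z \<noteq> v \<longrightarrow> g z = f z" and "\<forall>z\<in>B. f z \<in> B \<or> f z = b"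
    and "\<forall>z\<in>B. f z = b \<longrightarrow> z = v" and "z \<in> B"
  shows "forward_orbit g z = forward_orbit f z - {b}"
proof
  have "(g ^^ n) z \<in> forward_orbit f z \<and> (g ^^ n) z \<in> B" for n
  proof (induction n)
    case (Suc n)
    let ?y = "(g ^^ n) z"
    have "g ?y \<in> forward_orbit f z"
    proof (cases "?y = v")
      case True
      then have "g ?y = f (f ?y)" using assms(3,5) by simp
      then show ?thesis using Suc forward_orbit_step by metis
    qed (use Suc assms(6) forward_orbit_step in metis)
    moreover have "g ?y \<in> B" using Suc assms(4-8) by (cases "?y = v") auto
    ultimately show ?case by simp
  qed (use assms(9) forward_orbit_self in simp)
  then show "forward_orbit g z \<subseteq> forward_orbit f z - {b}"
    unfolding forward_orbit_def using assms(1) by auto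
next
  have "(f ^^ n) z \<in> B \<and> (f ^^ n) z \<in> forward_orbit g z \<or> (f ^^ n) z = b \<and> v \<in> forward_orbit g z" for n
  proof (induction n)
    case (Suc n)
    let ?y = "(f ^^ n) z"
    from Suc show ?case
    proof
      assume y: "?y \<in> B \<and> ?y \<in> forward_orbit g z"
      show ?thesis
      proof (cases "f ?y = b")
        case False
        then have "g ?y = f ?y" using assms(3,6) y by auto
        then show ?thesis using y False assms(7) forward_orbit_step by (metis funpow.simps(2) comp_apply)
      qed (use y assms(8) in auto)
    next
      assume "?y = b \<and> v \<in> forward_orbit g z"
      then show ?thesis using assms(4,5) forward_orbit_step by (metis funpow.simps(2) comp_apply)
    qed
  qed (use assms(9) forward_orbit_self[of z g] in simp)
  then show "forward_orbit f z - {b} \<subseteq> forward_orbit g z"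
    unfolding forward_orbit_def by auto
qed

section \<open>Matching systems and their constellations\<close>

text \<open>m k x is the other end of the colour-k edge at x, colour 0 is the colour contracted in
  the constellation and blk is the bipartition. A black vertex b stands for its colour-0 edge:
  cycle_step m i b is the black end of the colour-0 edge reached from b along colour i, so the
  orbits of cycle_step m i are the colour-i cycles, and the constellation with the colours in A
  is described by constellation_vertices, constellation_edges and constellation_ends.\<close>
definition matching_system :: "nat set \<Rightarrow> 'v set \<Rightarrow> (nat \<Rightarrow> 'v \<Rightarrow> 'v) \<Rightarrow> ('v \<Rightarrow> bool) \<Rightarrow> bool" where
  "matching_system A V m blk \<longleftrightarrow> finite V \<and> finite A \<and> 0 \<notin> A \<and> card A \<ge> 2 \<and>
     (\<forall>k\<in>insert 0 A. \<forall>x\<in>V. m k x \<in> V \<and> m k x \<noteq> x \<and> m k (m k x) = x \<and> (blk (m k x) \<longleftrightarrow> \<not> blk x))"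

definition cycle_step :: "(nat \<Rightarrow> 'v \<Rightarrow> 'v) \<Rightarrow> nat \<Rightarrow> 'v \<Rightarrow> 'v" where
  "cycle_step m i x = m 0 (m i x)"

definition colour_cycle :: "(nat \<Rightarrow> 'v \<Rightarrow> 'v) \<Rightarrow> nat \<Rightarrow> 'v \<Rightarrow> 'v set" where
  "colour_cycle m i x = forward_orbit (cycle_step m i) x"

definition constellation_vertices :: "nat set \<Rightarrow> 'v set \<Rightarrow> (nat \<Rightarrow> 'v \<Rightarrow> 'v) \<Rightarrow> ('v \<Rightarrow> bool) \<Rightarrow> ('v + nat \<times> 'v set) set" where
  "constellation_vertices A V m blk =
     Inl ` {b \<in> V. blk b} \<union> {Inr (i, colour_cycle m i b) | i b. i \<in> A \<and> b \<in> V \<and> blk b}"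

definition constellation_edges :: "nat set \<Rightarrow> 'v set \<Rightarrow> ('v \<Rightarrow> bool) \<Rightarrow> ('v \<times> nat) set" where
  "constellation_edges A V blk = {(b, i). b \<in> V \<and> blk b \<and> i \<in> A}"

definition constellation_ends :: "(nat \<Rightarrow> 'v \<Rightarrow> 'v) \<Rightarrow> 'v \<times> nat \<Rightarrow> ('v + nat \<times> 'v set) set" where
  "constellation_ends m = (\<lambda>(b, i). {Inl b, Inr (i, colour_cycle m i b)})"

abbreviation constellation_acyclic :: "nat set \<Rightarrow> 'v set \<Rightarrow> (nat \<Rightarrow> 'v \<Rightarrow> 'v) \<Rightarrow> ('v \<Rightarrow> bool) \<Rightarrow> bool" where
  "constellation_acyclic A V m blk \<equiv> \<not> has_cycle (constellation_vertices A V m blk) (constellation_edges A V blk) (constellation_ends m)"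

definition residue_step :: "nat set \<Rightarrow> 'v set \<Rightarrow> (nat \<Rightarrow> 'v \<Rightarrow> 'v) \<Rightarrow> ('v \<times> 'v) set" where
  "residue_step A U m = {(x, m k x) | x k. x \<in> U \<and> k \<in> A}"

definition residue :: "nat set \<Rightarrow> 'v set \<Rightarrow> (nat \<Rightarrow> 'v \<Rightarrow> 'v) \<Rightarrow> 'v \<Rightarrow> 'v set" where
  "residue A U m v = {y. (v, y) \<in> (residue_step A U m)\<^sup>*}"

text \<open>An edge is encoded by its colour and its set of ends.\<close>
definition residue_edges :: "nat set \<Rightarrow> (nat \<Rightarrow> 'v \<Rightarrow> 'v) \<Rightarrow> 'v set \<Rightarrow> (nat \<times> 'v set) set" where
  "residue_edges A m W = {(k, {z, m k z}) | z k. z \<in> W \<and> k \<in> A}"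

lemma matching_systemD:
  assumes "matching_system A V m blk" "k \<in> insert 0 A" "x \<in> V"
  shows "m k x \<in> V" "m k x \<noteq> x" "m k (m k x) = x" "blk (m k x) \<longleftrightarrow> \<not> blk x"
  using assms unfolding matching_system_def by blast+

lemma matching_system_colours:
  assumes "matching_system A V m blk"
  shows "finite V" "finite A" "0 \<notin> A" "card A \<ge> 2"
  using assms unfolding matching_system_def by blast+

lemma matching_system_other_colour:
  assumes "matching_system A V m blk"
  obtains k where "k \<in> A - {a}"
proof -
  have "\<not> A \<subseteq> {a}"
    using matching_system_colours[OF assms] card_mono[of "{a}" A] by auto
  then show ?thesis using that by blast
qed

lemma cycle_step_in:
  assumes "matching_system A V m blk" "i \<in> A" "x \<in> V"
  shows "cycle_step m i x \<in> V" "blk (cycle_step m i x) = blk x"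
  using matching_systemD[OF assms(1)] assms(2,3) unfolding cycle_step_def by auto

lemma inj_on_cycle_step:
  assumes "matching_system A V m blk" "i \<in> A"
  shows "inj_on (cycle_step m i) V"
proof
  fix x y assume xy: "x \<in> V" "y \<in> V" "cycle_step m i x = cycle_step m i y"
  then have "m i (m 0 (m 0 (m i x))) = m i (m 0 (m 0 (m i y)))" unfolding cycle_step_def by simp
  then show "x = y" using matching_systemD[OF assms(1)] xy assms(2) by auto
qed

lemma cycle_step_eq_self_iff:
  assumes "matching_system A V m blk" "i \<in> A" "x \<in> V"
  shows "cycle_step m i x = x \<longleftrightarrow> m i x = m 0 x"
  using matching_systemD[OF assms(1)] assms(2,3) unfolding cycle_step_def by (metis insertCI)

lemma colour_cycle_subset:
  assumes "matching_system A V m blk" "i \<in> A" "x \<in> V"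
  shows "colour_cycle m i x \<subseteq> V"
  unfolding colour_cycle_def
  using forward_orbit_subset[of V "cycle_step m i" x] cycle_step_in[OF assms(1,2)] assms(3) by blast

lemma colour_cycle_eq:
  assumes "matching_system A V m blk" "i \<in> A" "x \<in> V" "y \<in> colour_cycle m i x"
  shows "colour_cycle m i y = colour_cycle m i x"
  using forward_orbit_eq[of V "cycle_step m i" x y] matching_system_colours[OF assms(1)]
    inj_on_cycle_step[OF assms(1,2)] cycle_step_in[OF assms(1,2)] assms(3,4)
  unfolding colour_cycle_def by blast

definition deviating_part :: "nat set \<Rightarrow> 'v set \<Rightarrow> (nat \<Rightarrow> 'v \<Rightarrow> 'v) \<Rightarrow> ('v \<Rightarrow> bool) \<Rightarrow> ('v + nat \<times> 'v set) set" where
  "deviating_part A V m blk = Inl ` {b \<in> V. blk b} \<union>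
     {Inr (i, colour_cycle m i b) | i b. i \<in> A \<and> b \<in> V \<and> blk b \<and> cycle_step m i b \<noteq> b}"

lemma finite_deviating_part:
  assumes "matching_system A V m blk"
  shows "finite (deviating_part A V m blk)"
proof -
  have "deviating_part A V m blk \<subseteq>
      Inl ` {b \<in> V. blk b} \<union> (\<lambda>(i, b). Inr (i, colour_cycle m i b)) ` (A \<times> V)"
    unfolding deviating_part_def by auto
  moreover have "finite (Inl ` {b \<in> V. blk b} \<union> (\<lambda>(i, b). Inr (i, colour_cycle m i b)) ` (A \<times> V))"
    using matching_system_colours[OF assms] by simp
  ultimately show ?thesis by (rule finite_subset)
qed

lemma two_neighbours_within_cycle:
  assumes ms: "matching_system A V m blk" and "i \<in> A" "b \<in> V" "blk b" "cycle_step m i b \<noteq> b"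
  shows "two_neighbours_within (constellation_edges A V blk) (constellation_ends m)
    (deviating_part A V m blk) (Inr (i, colour_cycle m i b))"
proof -
  let ?b' = "cycle_step m i b"
  have b': "?b' \<in> V" "blk ?b'" using cycle_step_in[OF ms assms(2,3)] assms(4) by auto
  have "?b' \<in> colour_cycle m i b"
    unfolding colour_cycle_def by (rule forward_orbit_step[OF forward_orbit_self])
  then have "colour_cycle m i ?b' = colour_cycle m i b"
    using colour_cycle_eq[OF ms assms(2,3)] by blast
  then show ?thesis
    using assms b' unfolding two_neighbours_within_def constellation_edges_def constellation_ends_def
      deviating_part_def
    by (intro exI[of _ "(b, i)"] exI[of _ "(?b', i)"] exI[of _ "Inl b"] exI[of _ "Inl ?b'"])
      (auto simp: insert_commute)
qed

lemma two_neighbours_within_black: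
  assumes ms: "matching_system A V m blk" and b: "b \<in> V" "blk b"
    and k: "k1 \<in> A" "k2 \<in> A" "k1 \<noteq> k2" "m k1 b \<noteq> m 0 b" "m k2 b \<noteq> m 0 b"
  shows "two_neighbours_within (constellation_edges A V blk) (constellation_ends m)
    (deviating_part A V m blk) (Inl b)"
proof -
  have "cycle_step m k1 b \<noteq> b" "cycle_step m k2 b \<noteq> b"
    using cycle_step_eq_self_iff[OF ms] b k by auto
  then show ?thesis
    using b k unfolding two_neighbours_within_def constellation_edges_def constellation_ends_def
      deviating_part_def
    by (intro exI[of _ "(b, k1)"] exI[of _ "(b, k2)"]
        exI[of _ "Inr (k1, colour_cycle m k1 b)"] exI[of _ "Inr (k2, colour_cycle m k2 b)"]) auto
qed

lemma exists_black_vertex_with_one_deviating_colour: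
  assumes ms: "matching_system A V m blk" and "V \<noteq> {}" and "constellation_acyclic A V m blk"
  shows "\<exists>b\<in>V. blk b \<and> (\<forall>k1\<in>A. \<forall>k2\<in>A. m k1 b \<noteq> m 0 b \<longrightarrow> m k2 b \<noteq> m 0 b \<longrightarrow> k1 = k2)"
proof (rule ccontr)
  assume two: "\<not> ?thesis"
  let ?X = "deviating_part A V m blk"
  obtain x where "x \<in> V" using assms(2) by blast
  then have "x \<in> {b \<in> V. blk b} \<or> m 0 x \<in> {b \<in> V. blk b}"
    using matching_systemD[OF ms, of 0 x] by auto
  then have "?X \<noteq> {}" unfolding deviating_part_def by blast
  moreover have "?X \<subseteq> constellation_vertices A V m blk"
    unfolding deviating_part_def constellation_vertices_def by auto
  moreover have "\<forall>x\<in>?X. two_neighbours_within (constellation_edges A V blk) (constellation_ends m) ?X x"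
    using two_neighbours_within_cycle[OF ms] two_neighbours_within_black[OF ms] two
    unfolding deviating_part_def by fastforce
  ultimately have "has_cycle (constellation_vertices A V m blk) (constellation_edges A V blk) (constellation_ends m)"
    using has_cycle_if_min_degree_two finite_deviating_part[OF ms] by metis
  with assms(3) show False by simp
qed

section \<open>Residues\<close>

lemma residue_refl: "v \<in> residue A U m v"
  unfolding residue_def by simp

lemma residue_step_closed:
  assumes "y \<in> residue A U m v" "y \<in> U" "k \<in> A"
  shows "m k y \<in> residue A U m v"
proof -
  have "(y, m k y) \<in> residue_step A U m" unfolding residue_step_def using assms by blast
  then show ?thesis using assms(1) unfolding residue_def by (simp add: rtrancl_into_rtrancl)
qed

lemma residue_subset:
  assumes "matching_system A V m blk" "v \<in> V"
  shows "residue A V m v \<subseteq> V"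
proof
  fix y assume "y \<in> residue A V m v"
  then have "(v, y) \<in> (residue_step A V m)\<^sup>*" unfolding residue_def by simp
  then show "y \<in> V"
    by (induction rule: rtrancl_induct)
      (use assms matching_systemD(1)[OF assms(1)] in \<open>auto simp: residue_step_def\<close>)
qed

lemma residue_closed:
  assumes "matching_system A V m blk" "v \<in> V" "y \<in> residue A V m v" "k \<in> A"
  shows "m k y \<in> residue A V m v"
  using residue_step_closed[OF assms(3) _ assms(4)] residue_subset[OF assms(1,2)] assms(3) by blast

lemma residue_sym:
  assumes ms: "matching_system A V m blk" and "v \<in> V" "y \<in> residue A V m v"
  shows "v \<in> residue A V m y"
proof -
  have "(v, y) \<in> (residue_step A V m)\<^sup>*" using assms(3) unfolding residue_def by simp
  then have "(y, v) \<in> (residue_step A V m)\<^sup>*"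
  proof (induction rule: rtrancl_induct)
    case (step a c)
    then obtain k where k: "a \<in> V" "k \<in> A" "c = m k a" unfolding residue_step_def by blast
    then have "(c, a) \<in> residue_step A V m"
      unfolding residue_step_def using matching_systemD[OF ms, of k a] by force
    then show ?case using step by (meson converse_rtrancl_into_rtrancl)
  qed simp
  then show ?thesis unfolding residue_def by simp
qed

lemma residue_eq:
  assumes "matching_system A V m blk" "v \<in> V" "y \<in> residue A V m v"
  shows "residue A V m y = residue A V m v"
proof -
  have "(v, y) \<in> (residue_step A V m)\<^sup>*" "(y, v) \<in> (residue_step A V m)\<^sup>*"
    using residue_sym[OF assms] assms(3) unfolding residue_def by simp_all
  then show ?thesis unfolding residue_def by (blast intro: rtrancl_trans)
qed

lemma residue_disjoint:
  assumes "matching_system A V m blk" "v \<in> V" "b \<in> V" "v \<notin> residue A V m b"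
  shows "residue A V m v \<inter> residue A V m b = {}"
proof (rule ccontr)
  assume "residue A V m v \<inter> residue A V m b \<noteq> {}"
  then obtain y where "y \<in> residue A V m v" "y \<in> residue A V m b" by blast
  then have "residue A V m v = residue A V m b"
    using residue_eq[OF assms(1,2)] residue_eq[OF assms(1,3)] by metis
  then show False using residue_refl[of v A V m] assms(4) by simp
qed

lemma residue_transfer:
  assumes ms: "matching_system A V m blk" and "v \<in> V"
    and sub: "residue A V m v \<subseteq> U"
    and agree: "\<forall>z\<in>residue A V m v. \<forall>k\<in>A. m' k z = m k z"
  shows "residue A U m' v = residue A V m v"
proof
  show "residue A U m' v \<subseteq> residue A V m v"
  proof
    fix y assume "y \<in> residue A U m' v"
    then have "(v, y) \<in> (residue_step A U m')\<^sup>*" unfolding residue_def by simp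
    then show "y \<in> residue A V m v"
    proof (induction rule: rtrancl_induct)
      case (step a c)
      then obtain k where "k \<in> A" "c = m' k a" unfolding residue_step_def by blast
      then show ?case using agree step residue_closed[OF ms assms(2)] by auto
    qed (rule residue_refl)
  qed
  show "residue A V m v \<subseteq> residue A U m' v"
  proof
    fix y assume "y \<in> residue A V m v"
    then have "(v, y) \<in> (residue_step A V m)\<^sup>*" unfolding residue_def by simp
    then have "(v, y) \<in> (residue_step A U m')\<^sup>*"
    proof (induction rule: rtrancl_induct)
      case (step a c)
      then obtain k where k: "k \<in> A" "c = m k a" unfolding residue_step_def by blast
      have "a \<in> residue A V m v" using step(1) unfolding residue_def by simp
      then have "(a, c) \<in> residue_step A U m'" unfolding residue_step_def using k agree sub by force
      then show ?case using step by (meson rtrancl_into_rtrancl)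
    qed simp
    then show "y \<in> residue A U m' v" unfolding residue_def by simp
  qed
qed

lemma residue_edges_cong:
  assumes "\<forall>z\<in>W. \<forall>k\<in>A. m' k z = m k z"
  shows "residue_edges A m' W = residue_edges A m W"
  unfolding residue_edges_def using assms by force

section \<open>Melonic graphs\<close>

lemma melonic_gen_finite:
  assumes "melonic_gen A V E ends col"
  shows "finite A" "finite V" "finite E"
  using assms by (induction rule: melonic_gen.induct) auto

lemma melonic_colored_iso:
  assumes iso: "colored_iso V1 E1 ends1 col1 V2 E2 ends2 col2"
    and mel: "melonic A V2 E2 ends2 col2"
  shows "melonic A V1 E1 ends1 col1"
proof -
  obtain \<phi> \<psi> where i1: "bij_betw \<phi> V1 V2" "bij_betw \<psi> E1 E2"
      "\<forall>e\<in>E1. ends2 (\<psi> e) = \<phi> ` ends1 e \<and> col2 (\<psi> e) = col1 e"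
    using iso unfolding colored_iso_def by blast
  obtain V3 E3 ends3 col3 where m: "melonic_gen A V3 E3 ends3 col3"
    and "colored_iso V2 E2 ends2 col2 V3 E3 ends3 col3"
    using mel unfolding melonic_def by blast
  then obtain \<phi>' \<psi>' where i2: "bij_betw \<phi>' V2 V3" "bij_betw \<psi>' E2 E3"
      "\<forall>e\<in>E2. ends3 (\<psi>' e) = \<phi>' ` ends2 e \<and> col3 (\<psi>' e) = col2 e"
    unfolding colored_iso_def by blast
  have "bij_betw (\<phi>' \<circ> \<phi>) V1 V3" "bij_betw (\<psi>' \<circ> \<psi>) E1 E3"
    using bij_betw_trans i1(1,2) i2(1,2) by blast+
  moreover have "ends3 ((\<psi>' \<circ> \<psi>) e) = (\<phi>' \<circ> \<phi>) ` ends1 e \<and> col3 ((\<psi>' \<circ> \<psi>) e) = col1 e"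
    if "e \<in> E1" for e
  proof -
    have "\<psi> e \<in> E2" using i1(2) that bij_betwE by blast
    then show ?thesis using i1(3) i2(3) that by (simp add: image_comp)
  qed
  ultimately have "colored_iso V1 E1 ends1 col1 V3 E3 ends3 col3"
    unfolding colored_iso_def by blast
  then show ?thesis unfolding melonic_def using m by blast
qed

lemma melonic_melon:
  assumes "finite A" "card A \<ge> 2" "x \<noteq> y" "bij_betw col E A" "\<forall>e\<in>E. ends e = {x, y}"
  shows "melonic A {x, y} E ends col"
proof -
  have "melonic_gen A {0, 1} A (\<lambda>_. {0, 1}) id"
    by (rule melonic_gen.base) (use assms in auto)
  moreover have "colored_iso {x, y} E ends col {0, 1} A (\<lambda>_. {0, 1::nat}) id"
  proof -
    define \<phi> where "\<phi> z = (if z = x then 0 else 1 :: nat)" for z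
    have "bij_betw \<phi> {x, y} {0, 1}" unfolding \<phi>_def bij_betw_def inj_on_def using assms(3) by auto
    moreover have "{0, 1} = \<phi> ` {x, y}" unfolding \<phi>_def using assms(3) by auto
    ultimately show ?thesis
      unfolding colored_iso_def using assms(4,5) by (intro exI[of _ \<phi>] exI[of _ col]) simp
  qed
  ultimately show ?thesis unfolding melonic_def by blast
qed

lemma melonic_gen_insertion_fresh:
  fixes N X :: nat
  assumes mg: "melonic_gen A V E ends col" and e: "e \<in> E" "col e = a" "ends e = {u, v}"
    and fresh: "\<forall>g\<in>E. g < N" "\<forall>z\<in>V. z < X"
  shows "melonic_gen A (V \<union> {X, Suc X}) ((E - {e}) \<union> (\<lambda>k. N + Suc k) ` (A - {a}) \<union> {N + Suc a, N})
    (\<lambda>g. if g < N then ends g else if g = N then {Suc X, v} else if g = N + Suc a then {u, X} else {X, Suc X})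
    (\<lambda>g. if g < N then col g else if g = N then a else g - Suc N)"
proof (rule melonic_gen.insert[OF mg e(1,2,3)])
  show "X \<notin> V" "Suc X \<notin> V" "X \<noteq> Suc X" using fresh(2) by (auto dest: Suc_lessD)
  show "bij_betw (\<lambda>g. if g < N then col g else if g = N then a else g - Suc N)
      ((\<lambda>k. N + Suc k) ` (A - {a})) (A - {a})"
  proof (rule bij_betw_imageI)
    show "(\<lambda>g. if g < N then col g else if g = N then a else g - Suc N) ` (\<lambda>k. N + Suc k) ` (A - {a}) = A - {a}"
      unfolding image_image by simp
  qed (auto simp: inj_on_def)
qed (use melonic_gen_finite(1)[OF mg] fresh(1) in auto)

text \<open>Melonic graphs are closed under insertion on arbitrary carriers: transport the
  insertion along the isomorphism to the generating carriers, with fresh numbers for the new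
  vertices and edges.\<close>
lemma melonic_insertion:
  assumes mel: "melonic A V E ends col" and ends_V: "\<forall>g\<in>E. ends g \<subseteq> V"
    and e: "e \<in> E" "col e = a" "ends e = {u, v}"
    and xy: "x \<notin> V" "y \<notin> V" "x \<noteq> y"
    and F: "F \<inter> E = {}" "e1 \<notin> E \<union> F" "e2 \<notin> E \<union> F" "e1 \<noteq> e2"
      "bij_betw col' F (A - {a})" "\<forall>f\<in>F. ends' f = {x, y}"
    and new: "ends' e1 = {u, x}" "ends' e2 = {y, v}" "col' e1 = a" "col' e2 = a"
    and old: "\<forall>g\<in>E - {e}. ends' g = ends g \<and> col' g = col g"
  shows "melonic A (V \<union> {x, y}) ((E - {e}) \<union> F \<union> {e1, e2}) ends' col'"
proof -
  obtain V2 E2 ends2 col2 where mg: "melonic_gen A V2 E2 ends2 col2"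
    and "colored_iso V E ends col V2 E2 ends2 col2"
    using mel unfolding melonic_def by blast
  then obtain \<phi> \<psi> where bphi: "bij_betw \<phi> V V2" and bpsi: "bij_betw \<psi> E E2"
    and comp: "\<forall>g\<in>E. ends2 (\<psi> g) = \<phi> ` ends g \<and> col2 (\<psi> g) = col g"
    unfolding colored_iso_def by blast
  note fin = melonic_gen_finite[OF mg]
  define N where "N = Suc (Max (insert 0 E2))"
  have ltN: "g < N" if "g \<in> E2" for g
    using fin(3) that unfolding N_def by (simp add: le_imp_less_Suc)
  define X where "X = Suc (Max (insert 0 V2))"
  define Y where "Y = Suc X"
  have ltX: "z < X" if "z \<in> V2" for z
    using fin(2) that unfolding X_def by (simp add: le_imp_less_Suc)
  then have XY: "X \<notin> V2" "Y \<notin> V2" "X \<noteq> Y" unfolding Y_def by (auto dest: Suc_lessD)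
  define es where "es = \<psi> e"
  have es: "es \<in> E2" "ends2 es = {\<phi> u, \<phi> v}" "col2 es = a"
    using e comp bpsi bij_betwE unfolding es_def by fastforce+
  define ends3 where "ends3 g = (if g < N then ends2 g else if g = N then {Y, \<phi> v}
      else if g = N + Suc a then {\<phi> u, X} else {X, Y})" for g
  define col3 where "col3 g = (if g < N then col2 g else if g = N then a else g - Suc N)" for g
  define F2 where "F2 = (\<lambda>k. N + Suc k) ` (A - {a})"
  have mg3: "melonic_gen A (V2 \<union> {X, Y}) ((E2 - {es}) \<union> F2 \<union> {N + Suc a, N}) ends3 col3"
    using melonic_gen_insertion_fresh[OF mg es(1,3,2) ballI[OF ltN] ballI[OF ltX]]
    unfolding ends3_def[abs_def] col3_def[abs_def] F2_def Y_def .
  define \<phi>3 where "\<phi>3 z = (if z = x then X else if z = y then Y else \<phi> z)" for z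
  define \<psi>3 where "\<psi>3 g = (if g = e1 then N + Suc a else if g = e2 then N
      else if g \<in> F then N + Suc (col' g) else \<psi> g)" for g
  have "bij_betw \<phi>3 (V \<union> {x} \<union> {y}) (V2 \<union> {X} \<union> {Y})"
  proof (intro bij_betw_combine)
    show "bij_betw \<phi>3 V V2"
      using bphi by (rule bij_betw_cong[THEN iffD1, rotated]) (use xy in \<open>auto simp: \<phi>3_def\<close>)
  qed (use xy XY in \<open>auto simp: \<phi>3_def\<close>)
  then have bphi3: "bij_betw \<phi>3 (V \<union> {x, y}) (V2 \<union> {X, Y})" by (simp add: insert_commute)
  have "bij_betw \<psi>3 ((E - {e}) \<union> F \<union> {e1} \<union> {e2}) ((E2 - {es}) \<union> F2 \<union> {N + Suc a} \<union> {N})"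
  proof (intro bij_betw_combine)
    have "bij_betw \<psi> (E - {e}) (E2 - {es})"
      using bij_betw_DiffI[OF bpsi, of "{e}" "{es}"] e(1) es(1) unfolding es_def by auto
    then show "bij_betw \<psi>3 (E - {e}) (E2 - {es})"
      by (rule bij_betw_cong[THEN iffD1, rotated]) (use F in \<open>auto simp: \<psi>3_def\<close>)
    have "bij_betw ((\<lambda>k. N + Suc k) \<circ> col') F F2"
      unfolding F2_def by (rule bij_betw_trans[OF F(5)]) (simp add: bij_betw_def inj_on_def)
    then show "bij_betw \<psi>3 F F2"
      by (rule bij_betw_cong[THEN iffD1, rotated]) (use F in \<open>auto simp: \<psi>3_def\<close>)
    show "bij_betw \<psi>3 {e1} {N + Suc a}" "bij_betw \<psi>3 {e2} {N}"
      using F(4) by (simp_all add: \<psi>3_def)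
    have "g \<notin> F2 \<and> g \<noteq> N \<and> g \<noteq> N + Suc a" if "g \<in> E2" for g
      using ltN[OF that] unfolding F2_def by auto
    moreover have "N \<notin> F2" "N + Suc a \<notin> F2" unfolding F2_def by auto
    ultimately show "(E2 - {es}) \<inter> F2 = {}" "(E2 - {es} \<union> F2) \<inter> {N + Suc a} = {}"
      "(E2 - {es} \<union> F2 \<union> {N + Suc a}) \<inter> {N} = {}"
      by auto
  qed
  then have bpsi3: "bij_betw \<psi>3 ((E - {e}) \<union> F \<union> {e1, e2}) ((E2 - {es}) \<union> F2 \<union> {N + Suc a, N})"
    by (simp add: insert_commute Un_assoc)
  have "ends3 (\<psi>3 g) = \<phi>3 ` ends' g \<and> col3 (\<psi>3 g) = col' g" if g: "g \<in> (E - {e}) \<union> F \<union> {e1, e2}" for g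
  proof -
    have "u \<in> V" "v \<in> V" using ends_V e by auto
    then have \<phi>3_uv: "\<phi>3 u = \<phi> u" "\<phi>3 v = \<phi> v" "\<phi>3 x = X" "\<phi>3 y = Y"
      using xy unfolding \<phi>3_def by auto
    consider "g \<in> E - {e}" | "g \<in> F" | "g = e1" | "g = e2" using g by blast
    then show ?thesis
    proof cases
      case 1
      then have "\<psi>3 g = \<psi> g" using F(1-3) unfolding \<psi>3_def by auto
      moreover have "\<psi> g < N" using 1 ltN bij_betwE[OF bpsi] by blast
      moreover have "\<phi>3 ` ends g = \<phi> ` ends g"
      proof (rule image_cong[OF refl])
        show "\<phi>3 z = \<phi> z" if "z \<in> ends g" for z
          using that ends_V 1 xy unfolding \<phi>3_def by auto
      qed
      ultimately show ?thesis using 1 old comp unfolding ends3_def col3_def by simp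
    next
      case 2
      then have "\<psi>3 g = N + Suc (col' g)" "col' g \<noteq> a"
        using F(2,3) bij_betwE[OF F(5)] unfolding \<psi>3_def by auto
      then show ?thesis using 2 F(6) xy(3) unfolding ends3_def col3_def \<phi>3_def by auto
    next
      case 3
      then show ?thesis using new \<phi>3_uv unfolding \<psi>3_def ends3_def col3_def by simp
    next
      case 4
      then show ?thesis using new \<phi>3_uv F(4) unfolding \<psi>3_def ends3_def col3_def by simp
    qed
  qed
  then have "colored_iso (V \<union> {x, y}) ((E - {e}) \<union> F \<union> {e1, e2}) ends' col'
      (V2 \<union> {X, Y}) ((E2 - {es}) \<union> F2 \<union> {N + Suc a, N}) ends3 col3"
    unfolding colored_iso_def using bphi3 bpsi3 by blast
  then show ?thesis unfolding melonic_def using mg3 by blast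
qed

section \<open>Removing a melon\<close>

lemma residue_outside_unchanged:
  assumes ms: "matching_system A V m blk" and "v \<in> V" "b \<in> V" "v \<notin> residue A V m b"
    and "X \<subseteq> residue A V m b" and agree: "\<forall>z\<in>V - residue A V m b. \<forall>k\<in>A. m' k z = m k z"
  shows "residue A (V - X) m' v = residue A V m v"
    and "residue_edges A m' (residue A V m v) = residue_edges A m (residue A V m v)"
proof -
  have outside: "residue A V m v \<subseteq> V - residue A V m b"
    using residue_disjoint[OF ms assms(2-4)] residue_subset[OF ms assms(2)] by auto
  then have agree_v: "\<forall>z\<in>residue A V m v. \<forall>k\<in>A. m' k z = m k z"
    using agree by auto
  show "residue A (V - X) m' v = residue A V m v"
    by (rule residue_transfer[OF ms assms(2) _ agree_v]) (use outside assms(5) in auto)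
  show "residue_edges A m' (residue A V m v) = residue_edges A m (residue A V m v)"
    by (rule residue_edges_cong[OF agree_v])
qed

lemma constellation_acyclic_subset:
  assumes "constellation_acyclic A V m blk" "V' \<subseteq> V"
  shows "constellation_acyclic A V' m blk"
proof
  assume "has_cycle (constellation_vertices A V' m blk) (constellation_edges A V' blk) (constellation_ends m)"
  then have "has_cycle (constellation_vertices A V m blk) (constellation_edges A V blk) (constellation_ends m)"
    by (rule has_cycle_mono) (use assms(2) in \<open>auto simp: constellation_vertices_def constellation_edges_def\<close>)
  with assms(1) show False by simp
qed

context
  fixes A V m blk b w
  assumes ms: "matching_system A V m blk" and b: "b \<in> V" and w: "w = m 0 b"
    and melon: "\<forall>k\<in>A. m k b = w"
begin

lemma melon_swap: "k \<in> insert 0 A \<Longrightarrow> m k b = w \<and> m k w = b"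
  using matching_systemD(3)[OF ms _ b] melon w by (metis insert_iff)

lemma matching_system_remove_melon: "matching_system A (V - {b, w}) m blk"
proof -
  have "m k x \<noteq> b" "m k x \<noteq> w" if "k \<in> insert 0 A" "x \<in> V - {b, w}" for k x
    using melon_swap[OF that(1)] matching_systemD(3)[OF ms that(1)] that(2) by force+
  then show ?thesis
    using ms matching_systemD[OF ms] unfolding matching_system_def by auto
qed

lemma residue_melon: "residue A V m b = {b, w}"
proof
  show "residue A V m b \<subseteq> {b, w}"
  proof
    fix y assume "y \<in> residue A V m b"
    then have "(b, y) \<in> (residue_step A V m)\<^sup>*" unfolding residue_def by simp
    then show "y \<in> {b, w}"
      by (induction rule: rtrancl_induct) (use melon_swap in \<open>auto simp: residue_step_def\<close>)
  qed
  obtain k where "k \<in> A" using matching_system_other_colour[OF ms] by blast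
  then have "w \<in> residue A V m b" using residue_closed[OF ms b residue_refl] melon by metis
  then show "{b, w} \<subseteq> residue A V m b" using residue_refl by simp
qed

lemma melonic_residue_melon: "melonic A {b, w} (residue_edges A m {b, w}) snd fst"
proof (rule melonic_melon)
  have "residue_edges A m {b, w} = (\<lambda>k. (k, {b, w})) ` A"
    unfolding residue_edges_def using melon_swap by (auto simp: insert_commute)
  then show "bij_betw fst (residue_edges A m {b, w}) A" "\<forall>e\<in>residue_edges A m {b, w}. snd e = {b, w}"
    by (auto simp: bij_betw_def inj_on_def image_image)
qed (use matching_system_colours[OF ms] matching_systemD(2)[OF ms _ b, of 0] w in auto)

end

definition rewire :: "(nat \<Rightarrow> 'v \<Rightarrow> 'v) \<Rightarrow> nat \<Rightarrow> 'v \<Rightarrow> 'v \<Rightarrow> nat \<Rightarrow> 'v \<Rightarrow> 'v" where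
  "rewire m a u v = m(a := (\<lambda>z. if z = u then v else if z = v then u else m a z))"

lemma rewire_apply:
  "rewire m a u v k z = (if k = a \<and> z = u then v else if k = a \<and> z = v then u else m k z)"
  by (simp add: rewire_def)

text \<open>The vertices b and w = m 0 b are joined by all colours except a; this dipole is an
  elementary melon inserted on the colour-a edge \<open>{u, v}\<close>, which rewire m a u v removes again.\<close>
context
  fixes A V m blk a b w u v
  assumes ms: "matching_system A V m blk" and b: "b \<in> V" "blk b" and a: "a \<in> A"
    and w: "w = m 0 b" and u: "u = m a b" and v: "v = m a w"
    and deviates: "u \<noteq> w" and others: "\<forall>k\<in>A - {a}. m k b = w"
begin

lemma dipole_facts:
  shows "w \<in> V" "u \<in> V" "v \<in> V" "w \<noteq> b" "u \<noteq> b" "v \<noteq> w" "v \<noteq> b" "u \<noteq> v"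
    "m a u = b" "m a v = w" "m 0 w = b" "\<not> blk w" "\<not> blk u" "blk v"
    "\<forall>k\<in>A - {a}. m k w = b"
proof -
  have k: "a \<in> insert 0 A" "0 \<in> insert 0 A" using a by auto
  note D = matching_systemD[OF ms]
  show wV: "w \<in> V" and "u \<in> V" using D(1)[OF k(2) b(1)] D(1)[OF k(1) b(1)] w u by auto
  then show "v \<in> V" using D(1)[OF k(1)] v by simp
  show "w \<noteq> b" "u \<noteq> b" "v \<noteq> w" using D(2)[OF k(2) b(1)] D(2)[OF k(1) b(1)] D(2)[OF k(1) wV] w u v
    by auto
  show "m a u = b" "m a v = w" "m 0 w = b"
    using D(3)[OF k(1) b(1)] D(3)[OF k(1) wV] D(3)[OF k(2) b(1)] w u v by auto
  then show "v \<noteq> b" "u \<noteq> v" using deviates \<open>w \<noteq> b\<close> u by auto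
  show "\<not> blk w" "\<not> blk u" "blk v"
    using D(4)[OF k(2) b(1)] D(4)[OF k(1) b(1)] D(4)[OF k(1) wV] b(2) w u v by auto
  show "\<forall>k\<in>A - {a}. m k w = b" using D(3)[OF _ b(1)] others w by (metis DiffD1 insertCI)
qed

lemma matching_system_rewire: "matching_system A (V - {b, w}) (rewire m a u v) blk"
proof -
  note F = dipole_facts and D = matching_systemD[OF ms]
  have "rewire m a u v k x \<in> V - {b, w} \<and> rewire m a u v k x \<noteq> x \<and>
      rewire m a u v k (rewire m a u v k x) = x \<and> (blk (rewire m a u v k x) \<longleftrightarrow> \<not> blk x)"
    if k: "k \<in> insert 0 A" and x: "x \<in> V - {b, w}" for k x
  proof (cases "k = a \<and> (x = u \<or> x = v)")
    case True
    then show ?thesis using F(2-8,13,14) deviates by (auto simp: rewire_apply)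
  next
    case False
    have "x \<in> V" "x \<noteq> b" "x \<noteq> w" using x by auto
    have "m k x \<notin> {b, w} \<and> (k = a \<longrightarrow> m k x \<notin> {u, v})"
    proof (cases "k = a")
      case True
      then have "x \<noteq> u" "x \<noteq> v" using False by auto
      then show ?thesis
        using True D(3)[OF k \<open>x \<in> V\<close>] \<open>x \<noteq> b\<close> \<open>x \<noteq> w\<close> F(9,10) u v by auto
    next
      case False
      then have "m k b = w" "m k w = b" using k others F(11,15) w by auto
      then show ?thesis using False D(3)[OF k \<open>x \<in> V\<close>] \<open>x \<noteq> b\<close> \<open>x \<noteq> w\<close> by auto
    qed
    then show ?thesis using D[OF k \<open>x \<in> V\<close>] False by (auto simp: rewire_apply)
  qed
  then show ?thesis using ms unfolding matching_system_def by auto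
qed

lemma colour_cycle_rewire:
  assumes i: "i \<in> A" and z: "z \<in> V - {b, w}" "blk z"
  shows "colour_cycle (rewire m a u v) i z = colour_cycle m i z - {b}"
proof -
  note F = dipole_facts and D = matching_systemD[OF ms]
  have "a \<noteq> 0" using a matching_system_colours(3)[OF ms] by metis
  show ?thesis
  proof (cases "i = a")
    case False
    then have "cycle_step (rewire m a u v) i = cycle_step m i"
      using \<open>a \<noteq> 0\<close> by (simp add: rewire_def cycle_step_def[abs_def])
    moreover have "colour_cycle (rewire m a u v) i z \<subseteq> V - {b, w}"
      using colour_cycle_subset[OF matching_system_rewire i z(1)] .
    ultimately show ?thesis unfolding colour_cycle_def by auto
  next
    case True
    define B where "B = {x \<in> V - {b, w}. blk x}"
    have ka: "a \<in> insert 0 A" "0 \<in> insert 0 A" using a by auto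
    have "m 0 u \<noteq> b" using D(3)[OF ka(2) F(2)] w deviates by auto
    moreover have "m 0 u \<noteq> w" using D(3)[OF ka(2) F(2)] F(5,11) by auto
    ultimately have m0u: "m 0 u \<in> B"
      using D(1,4)[OF ka(2) F(2)] F(13) unfolding B_def by simp
    have "forward_orbit (cycle_step (rewire m a u v) a) z = forward_orbit (cycle_step m a) z - {b}"
    proof (rule forward_orbit_bypass)
      show "v \<in> B" "z \<in> B" "b \<notin> B" using F z unfolding B_def by auto
      show "cycle_step m a v = b" "cycle_step m a b \<in> B" "cycle_step (rewire m a u v) a v = cycle_step m a b"
        using F(8-11) m0u u \<open>a \<noteq> 0\<close> unfolding cycle_step_def by (simp_all add: rewire_apply)
      show "\<forall>x\<in>B. x \<noteq> v \<longrightarrow> cycle_step (rewire m a u v) a x = cycle_step m a x"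
        using F(13) \<open>a \<noteq> 0\<close> unfolding B_def cycle_step_def by (auto simp: rewire_apply)
      show "\<forall>x\<in>B. cycle_step m a x \<in> B \<or> cycle_step m a x = b"
      proof
        fix x assume "x \<in> B"
        then have "cycle_step m a x \<in> V" "blk (cycle_step m a x)"
          using cycle_step_in[OF ms a] unfolding B_def by auto
        then show "cycle_step m a x \<in> B \<or> cycle_step m a x = b" using F(12) unfolding B_def by auto
      qed
      show "\<forall>x\<in>B. cycle_step m a x = b \<longrightarrow> x = v"
      proof (intro ballI impI)
        fix x assume "x \<in> B" "cycle_step m a x = b"
        then have "x \<in> V" "m 0 (m 0 (m a x)) = w" unfolding B_def cycle_step_def w by auto
        then have "m a (m a x) = v" using D(1,3)[OF ka(2)] D(1)[OF ka(1)] v by auto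
        then show "x = v" using D(3)[OF ka(1) \<open>x \<in> V\<close>] by simp
      qed
    qed
    then show ?thesis using True unfolding colour_cycle_def by simp
  qed
qed

lemma constellation_acyclic_rewire:
  assumes acyclic: "constellation_acyclic A V m blk"
  shows "constellation_acyclic A (V - {b, w}) (rewire m a u v) blk"
proof
  let ?V' = "V - {b, w}" and ?m' = "rewire m a u v"
  define h where "h x = (case x of Inl z \<Rightarrow> Inl z | Inr (i, C) \<Rightarrow> Inr (i, \<Union> (colour_cycle m i ` C)))"
    for x :: "'a + nat \<times> 'a set"
  have h_cycle: "h (Inr (i, colour_cycle ?m' i z)) = Inr (i, colour_cycle m i z)"
    if "i \<in> A" "z \<in> ?V'" "blk z" for i z
  proof -
    let ?C = "colour_cycle ?m' i z"
    have "colour_cycle m i y = colour_cycle m i z" if "y \<in> ?C" for y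
      using colour_cycle_eq[OF ms \<open>i \<in> A\<close>] colour_cycle_rewire[OF \<open>i \<in> A\<close> \<open>z \<in> ?V'\<close> \<open>blk z\<close>] that
        \<open>z \<in> ?V'\<close> by auto
    then have "(\<Union>y\<in>?C. colour_cycle m i y) = (\<Union>y\<in>?C. colour_cycle m i z)" by (rule SUP_cong[OF refl])
    moreover have "z \<in> ?C" unfolding colour_cycle_def by (rule forward_orbit_self)
    ultimately show ?thesis unfolding h_def by (simp only: sum.case prod.case UN_constant) auto
  qed
  have constellation_vertex: "(\<exists>z. x = Inl z \<and> z \<in> ?V') \<or>
      (\<exists>i z. x = Inr (i, colour_cycle ?m' i z) \<and> i \<in> A \<and> z \<in> ?V' \<and> blk z \<and>
         h x = Inr (i, colour_cycle m i z))"
    if "x \<in> constellation_vertices A ?V' ?m' blk" for x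
    using that h_cycle unfolding constellation_vertices_def by blast
  assume "has_cycle (constellation_vertices A ?V' ?m' blk) (constellation_edges A ?V' blk) (constellation_ends ?m')"
  then have "has_cycle (constellation_vertices A V m blk) (constellation_edges A V blk) (constellation_ends m)"
  proof (rule has_cycle_image[where h = h and g = id])
    show "inj_on h (constellation_vertices A ?V' ?m' blk)"
    proof (rule inj_onI)
      fix x y assume "x \<in> constellation_vertices A ?V' ?m' blk" "y \<in> constellation_vertices A ?V' ?m' blk" "h x = h y"
      then show "x = y"
        using constellation_vertex[of x] constellation_vertex[of y] colour_cycle_rewire unfolding h_def by auto
    qed
    show "h ` constellation_vertices A ?V' ?m' blk \<subseteq> constellation_vertices A V m blk"
      using constellation_vertex unfolding constellation_vertices_def h_def by fastforce
    show "\<forall>e\<in>constellation_edges A ?V' blk. constellation_ends m (id e) = h ` constellation_ends ?m' e"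
      using h_cycle unfolding constellation_edges_def constellation_ends_def h_def by auto
  qed (auto simp: constellation_edges_def)
  with acyclic show False by simp
qed

lemma dipole_in_residue: "{b, w, u, v} \<subseteq> residue A V m b"
proof -
  obtain k where k: "k \<in> A - {a}" using matching_system_other_colour[OF ms] by blast
  have "m a b \<in> residue A V m b" "m k b \<in> residue A V m b"
    using residue_closed[OF ms b(1) residue_refl] a k by auto
  then have "u \<in> residue A V m b" "w \<in> residue A V m b" using k others u by auto
  moreover have "v \<in> residue A V m b" using residue_closed[OF ms b(1) \<open>w \<in> _\<close> a] v by simp
  ultimately show ?thesis using residue_refl by auto
qed

lemma residue_rewire: "residue A (V - {b, w}) (rewire m a u v) u = residue A V m b - {b, w}"
proof
  let ?V' = "V - {b, w}" and ?m' = "rewire m a u v" and ?W = "residue A V m b"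
  note F = dipole_facts and W = dipole_in_residue
  have u': "u \<in> ?V'" using F deviates by simp
  have "y \<in> ?W" if "y \<in> residue A ?V' ?m' u" for y
  proof -
    have "(u, y) \<in> (residue_step A ?V' ?m')\<^sup>*" using that unfolding residue_def by simp
    then show ?thesis
    proof (induction rule: rtrancl_induct)
      case (step y z)
      then obtain k where "k \<in> A" "y \<in> V" "z = ?m' k y" unfolding residue_step_def by blast
      then show ?case using residue_closed[OF ms b(1) step.IH] W by (auto simp: rewire_apply)
    qed (use W in simp)
  qed
  then show "residue A ?V' ?m' u \<subseteq> ?W - {b, w}"
    using residue_subset[OF matching_system_rewire u'] by blast
  show "?W - {b, w} \<subseteq> residue A ?V' ?m' u"
  proof
    fix y assume y: "y \<in> ?W - {b, w}"
    have "(b, y) \<in> (residue_step A V m)\<^sup>*" using y unfolding residue_def by simp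
    then have "y \<in> {b, w} \<or> y \<in> residue A ?V' ?m' u"
    proof (induction rule: rtrancl_induct)
      case (step y z)
      then obtain k where k: "k \<in> A" "y \<in> V" "z = m k y" unfolding residue_step_def by blast
      consider "y = b" | "y = w" "k = a" | "y = w" "k \<noteq> a" | "y \<notin> {b, w}" by blast
      then show ?case
      proof cases
        case 1
        then have "z = u \<or> z = w" using k others u by (cases "k = a") auto
        then show ?thesis using residue_refl[of u A ?V' ?m'] by auto
      next
        case 2
        then have "z = ?m' a u" using k v F(8) by (simp add: rewire_apply)
        then show ?thesis using residue_step_closed[OF residue_refl u' a] by simp
      next
        case 3
        then show ?thesis using k F(15) by auto
      next
        case 4
        then have IH: "y \<in> residue A ?V' ?m' u" using step.IH by simp
        show ?thesis
        proof (cases "z \<in> {b, w}")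
          case False
          then have "z = ?m' k y" using k F(9,10) by (auto simp: rewire_apply)
          then show ?thesis using residue_step_closed[OF IH _ k(1)] k(2) 4 by simp
        qed simp
      qed
    qed simp
    then show "y \<in> residue A ?V' ?m' u" using y by blast
  qed
qed

lemma residue_edges_rewire:
  defines "W \<equiv> residue A V m b"
  shows "residue_edges A m W =
    (residue_edges A (rewire m a u v) (W - {b, w}) - {(a, {u, v})}) \<union>
    (\<lambda>k. (k, {b, w})) ` (A - {a}) \<union> {(a, {u, b}), (a, {w, v})}" (is "_ = ?R")
proof
  note F = dipole_facts and uvW = dipole_in_residue[folded W_def]
  have swap: "m k b = w" "m k w = b" if "k \<in> A - {a}" for k using that others F(15) by auto
  have rewired: "rewire m a u v k z = m k z" if "\<not> (k = a \<and> (z = u \<or> z = v))" for k z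
    using that by (auto simp: rewire_apply)
  show "residue_edges A m W \<subseteq> ?R"
  proof
    fix e assume "e \<in> residue_edges A m W"
    then obtain k z where e: "e = (k, {z, m k z})" "z \<in> W" "k \<in> A" unfolding residue_edges_def by blast
    consider "z \<in> {b, w}" | "z \<notin> {b, w}" "k = a" "z \<in> {u, v}" | "z \<notin> {b, w}" "\<not> (k = a \<and> z \<in> {u, v})"
      by blast
    then show "e \<in> ?R"
    proof cases
      case 1
      then show ?thesis using e swap u v by (cases "k = a") (auto simp: insert_commute)
    next
      case 2
      then show ?thesis using e F(9,10) by (auto simp: insert_commute)
    next
      case 3
      then have "e \<in> residue_edges A (rewire m a u v) (W - {b, w})"
        using e rewired unfolding residue_edges_def by fastforce
      moreover have "e \<noteq> (a, {u, v})" using 3 e by (auto simp: doubleton_eq_iff)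
      ultimately show ?thesis by blast
    qed
  qed
  show "?R \<subseteq> residue_edges A m W"
  proof
    fix e assume "e \<in> ?R"
    then consider k z where "e = (k, {z, rewire m a u v k z})" "z \<in> W - {b, w}" "k \<in> A"
        "e \<noteq> (a, {u, v})"
      | k where "k \<in> A - {a}" "e = (k, {b, w})" | "e = (a, {u, b})" | "e = (a, {w, v})"
      unfolding residue_edges_def by blast
    then show "e \<in> residue_edges A m W"
    proof cases
      case (1 k z)
      then have "rewire m a u v k z = m k z" using F(8) by (auto simp: rewire_apply insert_commute)
      then show ?thesis using 1 unfolding residue_edges_def by auto
    next
      case (2 k)
      then show ?thesis using swap uvW unfolding residue_edges_def by force
    qed (use a u v uvW in \<open>force simp: residue_edges_def insert_commute\<close>)+
  qed
qed

lemma melonic_residue_rewire: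
  defines "W \<equiv> residue A V m b"
  assumes mel: "melonic A (W - {b, w}) (residue_edges A (rewire m a u v) (W - {b, w})) snd fst"
  shows "melonic A W (residue_edges A m W) snd fst"
proof -
  let ?W' = "W - {b, w}" and ?m' = "rewire m a u v"
  let ?E' = "residue_edges A ?m' ?W'" and ?F = "(\<lambda>k. (k, {b, w})) ` (A - {a})"
  note F = dipole_facts and uvW = dipole_in_residue[folded W_def]
  have W': "?W' = residue A (V - {b, w}) ?m' u" using residue_rewire unfolding W_def by simp
  have u': "u \<in> V - {b, w}" using F deviates by simp
  have ends_W': "\<forall>g\<in>?E'. snd g \<subseteq> ?W'"
    unfolding W' residue_edges_def using residue_closed[OF matching_system_rewire u'] by auto
  have e: "(a, {u, v}) \<in> ?E'"
    using uvW F(5,8) a deviates unfolding residue_edges_def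
    by (intro CollectI exI[of _ u] exI[of _ a]) (auto simp: rewire_apply)
  have "melonic A (?W' \<union> {b, w}) ((?E' - {(a, {u, v})}) \<union> ?F \<union> {(a, {u, b}), (a, {w, v})}) snd fst"
  proof (rule melonic_insertion[OF mel ends_W' e])
    have "b \<notin> snd g" "w \<notin> snd g" if "g \<in> ?E'" for g using ends_W' that by auto
    then show "?F \<inter> ?E' = {}" "(a, {u, b}) \<notin> ?E' \<union> ?F" "(a, {w, v}) \<notin> ?E' \<union> ?F"
      using F(4) deviates by (fastforce simp: doubleton_eq_iff)+
    show "bij_betw fst ?F (A - {a})" by (auto simp: bij_betw_def inj_on_def image_image)
  qed (use F in auto)
  moreover have "?W' \<union> {b, w} = W" using uvW by auto
  ultimately show ?thesis using residue_edges_rewire unfolding W_def by simp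
qed

end

lemma residue_melonic:
  assumes "matching_system A V m blk" "constellation_acyclic A V m blk" "v \<in> V"
  shows "melonic A (residue A V m v) (residue_edges A m (residue A V m v)) snd fst"
  using assms
proof (induction "card V" arbitrary: V m v rule: less_induct)
  case less
  note ms = less.prems(1) and acyclic = less.prems(2) and v = less.prems(3)
  obtain b where b: "b \<in> V" "blk b"
    and one: "\<forall>k1\<in>A. \<forall>k2\<in>A. m k1 b \<noteq> m 0 b \<longrightarrow> m k2 b \<noteq> m 0 b \<longrightarrow> k1 = k2"
    using exists_black_vertex_with_one_deviating_colour[OF ms _ acyclic] v by auto
  define w where "w = m 0 b"
  let ?V' = "V - {b, w}" and ?W = "residue A V m b"
  have "card ?V' < card V"
    using matching_system_colours(1)[OF ms] b(1) by (intro psubset_card_mono) auto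
  note IH = less.hyps[OF this]
  consider (melon) "\<forall>k\<in>A. m k b = w" | (dipole) a where "a \<in> A" "m a b \<noteq> w" "\<forall>k\<in>A - {a}. m k b = w"
    using one unfolding w_def by blast
  note cases = this
  show ?case
  proof (cases "v \<in> ?W")
    case True
    from cases have "melonic A ?W (residue_edges A m ?W) snd fst"
    proof cases
      case melon
      then show ?thesis
        using residue_melon[OF ms b(1) w_def melon] melonic_residue_melon[OF ms b(1) w_def melon] by simp
    next
      case (dipole a)
      note dipole = ms b dipole(1) w_def refl refl dipole(2,3)
      have "m a b \<in> ?V'" using dipole_facts[OF dipole] \<open>m a b \<noteq> w\<close> by simp
      then have "melonic A (?W - {b, w}) (residue_edges A (rewire m a (m a b) (m a w)) (?W - {b, w})) snd fst"
        using IH[OF matching_system_rewire[OF dipole] constellation_acyclic_rewire[OF dipole acyclic]]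
          residue_rewire[OF dipole] by metis
      then show ?thesis by (rule melonic_residue_rewire[OF dipole])
    qed
    then show ?thesis using residue_eq[OF ms b(1) True] by simp
  next
    case False
    from cases obtain m' where ms': "matching_system A ?V' m' blk"
      and acyclic': "constellation_acyclic A ?V' m' blk" and agree: "\<forall>z\<in>V - ?W. \<forall>k\<in>A. m' k z = m k z"
    proof cases
      case melon
      show ?thesis
        using that[OF matching_system_remove_melon[OF ms b(1) w_def melon]
            constellation_acyclic_subset[OF acyclic, of ?V']] by blast
    next
      case (dipole a)
      note dipole = ms b dipole(1) w_def refl refl dipole(2,3)
      have "\<forall>z\<in>V - ?W. \<forall>k\<in>A. rewire m a (m a b) (m a w) k z = m k z"
        using dipole_in_residue[OF dipole] by (auto simp: rewire_apply)
      then show ?thesis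
        using that[OF matching_system_rewire[OF dipole] constellation_acyclic_rewire[OF dipole acyclic]] by blast
    qed
    obtain k where "k \<in> A" "m k b = w"
      using cases matching_system_other_colour[OF ms] by (metis DiffE)
    then have "{b, w} \<subseteq> ?W" using residue_closed[OF ms b(1) residue_refl] residue_refl by auto
    note unchanged = residue_outside_unchanged[OF ms v b(1) False this agree]
    have "v \<in> ?V'" using v False \<open>{b, w} \<subseteq> ?W\<close> by auto
    from IH[OF ms' acyclic' this] show ?thesis by (simp only: unchanged)
  qed
qed

section \<open>Colored graphs as matching systems\<close>

definition other_end :: "'e set \<Rightarrow> ('e \<Rightarrow> 'v set) \<Rightarrow> ('e \<Rightarrow> nat) \<Rightarrow> nat \<Rightarrow> 'v \<Rightarrow> 'v" where
  "other_end E ends col k x = (THE y. y \<in> ends (edge_at E ends col x k) \<and> y \<noteq> x)"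

context
  fixes q V E ends col
  assumes cg: "colored_graph q V E ends col"
begin

lemma edge_atD:
  assumes "x \<in> V" "k \<le> q"
  shows "edge_at E ends col x k \<in> E" "col (edge_at E ends col x k) = k" "x \<in> ends (edge_at E ends col x k)"
proof -
  have "\<exists>!e. e \<in> E \<and> col e = k \<and> x \<in> ends e" using assms cg unfolding colored_graph_def by blast
  then have "edge_at E ends col x k \<in> E \<and> col (edge_at E ends col x k) = k \<and> x \<in> ends (edge_at E ends col x k)"
    unfolding edge_at_def by (rule theI')
  then show "edge_at E ends col x k \<in> E" "col (edge_at E ends col x k) = k" "x \<in> ends (edge_at E ends col x k)"
    by simp_all
qed

lemma edge_at_unique:
  assumes "x \<in> V" "e \<in> E" "x \<in> ends e"
  shows "edge_at E ends col x (col e) = e"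
proof -
  have "col e \<le> q" using cg assms(2) unfolding colored_graph_def by blast
  then have "\<exists>!e'. e' \<in> E \<and> col e' = col e \<and> x \<in> ends e'" using assms(1) cg unfolding colored_graph_def by blast
  then show ?thesis using edge_atD[OF assms(1) \<open>col e \<le> q\<close>] assms(2,3) by metis
qed

lemma ends_edge_at:
  assumes "x \<in> V" "k \<le> q"
  shows "ends (edge_at E ends col x k) = {x, other_end E ends col k x}"
    "other_end E ends col k x \<noteq> x" "other_end E ends col k x \<in> V"
proof -
  let ?e = "edge_at E ends col x k"
  obtain y1 y2 where "y1 \<in> V" "y2 \<in> V" "y1 \<noteq> y2" "ends ?e = {y1, y2}"
    using cg edge_atD(1)[OF assms] unfolding colored_graph_def by blast
  then obtain y where y: "ends ?e = {x, y}" "y \<noteq> x" "y \<in> V"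
    using edge_atD(3)[OF assms] by auto
  then have "\<exists>!z. z \<in> ends ?e \<and> z \<noteq> x" by auto
  then have "other_end E ends col k x = y" unfolding other_end_def using y by auto
  then show "ends ?e = {x, other_end E ends col k x}" "other_end E ends col k x \<noteq> x"
    "other_end E ends col k x \<in> V" using y by auto
qed

lemma edge_at_other_end:
  assumes "x \<in> V" "k \<le> q"
  shows "edge_at E ends col (other_end E ends col k x) k = edge_at E ends col x k"
  using edge_at_unique[OF ends_edge_at(3)[OF assms] edge_atD(1)[OF assms]] edge_atD(2)[OF assms]
    ends_edge_at(1)[OF assms] by simp

lemma other_end_other_end:
  assumes "x \<in> V" "k \<le> q"
  shows "other_end E ends col k (other_end E ends col k x) = x"
  using ends_edge_at[OF assms] ends_edge_at[OF ends_edge_at(3)[OF assms] assms(2)] edge_at_other_end[OF assms]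
  by (auto simp: doubleton_eq_iff)

lemma ends_eq_other_end:
  assumes "e \<in> E" "x \<in> ends e" "ends e \<subseteq> V"
  shows "ends e = {x, other_end E ends col (col e) x}" "col e \<le> q"
proof -
  show "col e \<le> q" using cg assms(1) unfolding colored_graph_def by blast
  have "x \<in> V" using assms(2,3) by auto
  then have "edge_at E ends col x (col e) = e" using edge_at_unique assms(1,2) by simp
  then show "ends e = {x, other_end E ends col (col e) x}"
    using ends_edge_at(1)[OF \<open>x \<in> V\<close> \<open>col e \<le> q\<close>] by simp
qed

lemma component_eq_residue:
  assumes A: "A \<subseteq> {..q}" and v: "v \<in> V"
  shows "component V {e \<in> E. col e \<in> A} ends v = residue A V (other_end E ends col) v"
proof -
  let ?m = "other_end E ends col" and ?R = "adj {e \<in> {e \<in> E. col e \<in> A}. ends e \<subseteq> V} ends"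
  have "(v, y) \<in> ?R\<^sup>* \<longleftrightarrow> (v, y) \<in> (residue_step A V ?m)\<^sup>*" for y
  proof
    assume "(v, y) \<in> ?R\<^sup>*"
    then show "(v, y) \<in> (residue_step A V ?m)\<^sup>*"
    proof (induction rule: rtrancl_induct)
      case (step x y)
      then obtain e where e: "e \<in> E" "col e \<in> A" "ends e \<subseteq> V" "x \<in> ends e" "y \<in> ends e"
        unfolding adj_def by blast
      then have "y = x \<or> y = ?m (col e) x" using ends_eq_other_end[OF e(1,4,3)] by auto
      moreover have "(x, ?m (col e) x) \<in> residue_step A V ?m"
        using e unfolding residue_step_def by blast
      ultimately show ?case using step.IH by (auto intro: rtrancl_into_rtrancl)
    qed simp
  next
    assume "(v, y) \<in> (residue_step A V ?m)\<^sup>*"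
    then show "(v, y) \<in> ?R\<^sup>*"
    proof (induction rule: rtrancl_induct)
      case (step x y)
      then obtain k where k: "x \<in> V" "k \<in> A" "y = ?m k x" unfolding residue_step_def by blast
      then have "k \<le> q" using A by auto
      then have "(x, y) \<in> ?R"
        using edge_atD[OF k(1)] ends_edge_at[OF k(1)] k unfolding adj_def by fastforce
      with step.IH show ?case by (rule rtrancl_into_rtrancl)
    qed simp
  qed
  moreover have "residue A V ?m v \<subseteq> V"
  proof
    fix y assume "y \<in> residue A V ?m v"
    then have "(v, y) \<in> (residue_step A V ?m)\<^sup>*" unfolding residue_def by simp
    then show "y \<in> V"
      by (induction rule: rtrancl_induct) (use v A ends_edge_at(3) in \<open>auto simp: residue_step_def\<close>)
  qed
  ultimately show ?thesis unfolding component_def residue_def by auto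
qed

lemma colored_iso_residue_edges:
  assumes A: "A \<subseteq> {..q}" and W: "W \<subseteq> V" "\<forall>z\<in>W. \<forall>k\<in>A. other_end E ends col k z \<in> W"
  shows "colored_iso W (edges_within {e \<in> E. col e \<in> A} ends W) ends col
    W (residue_edges A (other_end E ends col) W) snd fst"
proof -
  let ?EA = "edges_within {e \<in> E. col e \<in> A} ends W" and ?m = "other_end E ends col"
  have some_end: "\<exists>x. x \<in> ends e" if "e \<in> E" for e using cg that unfolding colored_graph_def by blast
  have ends: "ends e = {x, ?m (col e) x}" "e = edge_at E ends col x (col e)" if "e \<in> ?EA" "x \<in> ends e" for e x
  proof -
    have "e \<in> E" "ends e \<subseteq> V" using that W(1) unfolding edges_within_def by auto
    then show "ends e = {x, ?m (col e) x}" "e = edge_at E ends col x (col e)"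
      using ends_eq_other_end(1) edge_at_unique that(2) by auto
  qed
  have "bij_betw (\<lambda>e. (col e, ends e)) ?EA (residue_edges A ?m W)"
  proof (rule bij_betwI')
    show "(col e, ends e) = (col e', ends e') \<longleftrightarrow> e = e'" if "e \<in> ?EA" "e' \<in> ?EA" for e e'
      using that some_end ends unfolding edges_within_def by (metis (no_types, lifting) mem_Collect_eq prod.inject)
    show "(col e, ends e) \<in> residue_edges A ?m W" if e: "e \<in> ?EA" for e
    proof -
      obtain x where "x \<in> ends e" using some_end e unfolding edges_within_def by blast
      then show ?thesis using e ends unfolding edges_within_def residue_edges_def by blast
    qed
    show "\<exists>e\<in>?EA. p = (col e, ends e)" if p: "p \<in> residue_edges A ?m W" for p
    proof -
      obtain z k where p: "p = (k, {z, ?m k z})" "z \<in> W" "k \<in> A" using p unfolding residue_edges_def by blast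
      then have "z \<in> V" "k \<le> q" using A W by auto
      then show ?thesis
        using p W(2) edge_atD ends_edge_at(1) unfolding edges_within_def
        by (intro bexI[of _ "edge_at E ends col z k"]) auto
    qed
  qed
  then show ?thesis
    unfolding colored_iso_def by (intro exI[of _ id] exI[of _ "\<lambda>e. (col e, ends e)"]) simp
qed

end

context
  fixes q V E ends col blk
  assumes cg: "colored_graph q V E ends col"
    and bip: "\<forall>e\<in>E. \<exists>b w. ends e = {b, w} \<and> blk b \<and> \<not> blk w"
begin

lemma blk_other_end:
  assumes "x \<in> V" "k \<le> q"
  shows "blk (other_end E ends col k x) \<longleftrightarrow> \<not> blk x"
proof -
  obtain b w where "ends (edge_at E ends col x k) = {b, w}" "blk b" "\<not> blk w"
    using bip edge_atD(1)[OF cg assms] by blast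
  then show ?thesis using ends_edge_at[OF cg assms] by (auto simp: doubleton_eq_iff)
qed

lemma matching_system_other_end:
  assumes "A \<subseteq> {1..q}" "2 \<le> card A"
  shows "matching_system A V (other_end E ends col) blk"
  unfolding matching_system_def
proof (intro conjI ballI)
  show "finite V" using cg unfolding colored_graph_def by simp
  show "finite A" "0 \<notin> A" using assms(1) finite_subset by auto
  fix k x assume "k \<in> insert 0 A" "x \<in> V"
  moreover have "k \<le> q" using calculation(1) assms(1) by auto
  ultimately show "other_end E ends col k x \<in> V" "other_end E ends col k x \<noteq> x"
    "other_end E ends col k (other_end E ends col k x) = x"
    "blk (other_end E ends col k x) \<longleftrightarrow> \<not> blk x"
    using ends_edge_at[OF cg] other_end_other_end[OF cg] blk_other_end by auto
qed (use assms(2) in simp)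

lemma black_white_end_edge_at:
  assumes "b \<in> V" "blk b" "k \<le> q"
  shows "black_end ends blk (edge_at E ends col b k) = b"
    and "white_end ends blk (edge_at E ends col b k) = other_end E ends col k b"
  using ends_edge_at[OF cg assms(1,3)] blk_other_end[OF assms(1,3)] assms(2)
  unfolding black_end_def white_end_def by (auto intro!: the_equality)

lemma psi_succ_edge_at:
  assumes "b \<in> V" "blk b" "i \<le> q"
  shows "psi_succ E ends col blk i (edge_at E ends col b 0) =
    edge_at E ends col (cycle_step (other_end E ends col) i b) 0"
  using black_white_end_edge_at[OF assms] black_white_end_edge_at(1)[OF assms(1,2), of 0]
    edge_at_other_end[OF cg ends_edge_at(3)[OF cg assms(1,3)], of 0]
  unfolding psi_succ_def cycle_step_def by simp

lemma cycle_step_black: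
  assumes "b \<in> V" "blk b" "i \<le> q"
  shows "cycle_step (other_end E ends col) i b \<in> V" "blk (cycle_step (other_end E ends col) i b)"
  using ends_edge_at(3)[OF cg] blk_other_end assms unfolding cycle_step_def by auto

lemma colour_cycle_black:
  assumes "b \<in> V" "blk b" "i \<le> q"
  shows "colour_cycle (other_end E ends col) i b \<subseteq> {x \<in> V. blk x}"
  unfolding colour_cycle_def using cycle_step_black assms(3)
  by (intro forward_orbit_subset) (use assms(1,2) in auto)

lemma psi_cycle_edge_at:
  assumes "b \<in> V" "blk b" "i \<le> q"
  shows "psi_cycle E ends col blk i (edge_at E ends col b 0) =
    (\<lambda>z. edge_at E ends col z 0) ` colour_cycle (other_end E ends col) i b"
proof -
  let ?f = "cycle_step (other_end E ends col) i"
  have "(psi_succ E ends col blk i ^^ n) (edge_at E ends col b 0) = edge_at E ends col ((?f ^^ n) b) 0 \<and>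
    (?f ^^ n) b \<in> V \<and> blk ((?f ^^ n) b)" for n
    by (induction n) (use assms psi_succ_edge_at cycle_step_black in auto)
  then show ?thesis unfolding psi_cycle_def colour_cycle_def forward_orbit_def by auto
qed

lemma inj_on_edge_at_black: "inj_on (\<lambda>z. edge_at E ends col z 0) {x \<in> V. blk x}"
proof
  fix x y assume "x \<in> {x \<in> V. blk x}" "y \<in> {x \<in> V. blk x}"
    and eq: "edge_at E ends col x 0 = edge_at E ends col y 0"
  then have x: "x \<in> V" "blk x" and y: "y \<in> V" "blk y" by auto
  have "x = black_end ends blk (edge_at E ends col x 0)"
    using black_white_end_edge_at(1)[OF x, of 0] by simp
  also have "\<dots> = y" unfolding eq using black_white_end_edge_at(1)[OF y, of 0] by simp
  finally show "x = y" .
qed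

text \<open>A colour-0 edge is represented by its black end; this embeds the constellation of the
  matching system into the constellation S with colour c removed.\<close>
lemma constellation_acyclic_if_trees:
  assumes A: "A \<subseteq> {1..q} - {c}" and "c \<noteq> 0"
    and trees: "all_components_trees (psiV_hat q c E ends col blk) (psiE_hat q c E col) (psi_ends E ends col blk)"
  shows "constellation_acyclic A V (other_end E ends col) blk"
proof
  let ?m = "other_end E ends col" and ?ea = "\<lambda>z. edge_at E ends col z 0" and ?Bl = "{x \<in> V. blk x}"
  define h where "h x = (case x of Inl b \<Rightarrow> Inl (?ea b) | Inr (i :: nat, C) \<Rightarrow> Inr (i, ?ea ` C))" for x
  define g where "g = (\<lambda>(b, i). (?ea b, i :: nat))"
  have i_le: "i \<le> q" if "i \<in> A" for i using that A by auto
  have ea: "?ea b \<in> E" "col (?ea b) = 0" if "b \<in> V" for b using edge_atD[OF cg that] by auto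
  have h_cycle: "h (Inr (i, colour_cycle ?m i b)) = Inr (i, psi_cycle E ends col blk i (?ea b))"
    if "i \<in> A" "b \<in> ?Bl" for i b
    using psi_cycle_edge_at[OF _ _ i_le] that unfolding h_def by simp
  assume "has_cycle (constellation_vertices A V ?m blk) (constellation_edges A V blk) (constellation_ends ?m)"
  then have "has_cycle (psiV_hat q c E ends col blk) (psiE_hat q c E col) (psi_ends E ends col blk)"
  proof (rule has_cycle_image[where h = h and g = g])
    show "inj_on h (constellation_vertices A V ?m blk)"
    proof (rule inj_onI)
      fix x y assume x: "x \<in> constellation_vertices A V ?m blk" and y: "y \<in> constellation_vertices A V ?m blk"
        and hxy: "h x = h y"
      have cycle_inj: "colour_cycle ?m i b = colour_cycle ?m i b'"
        if "?ea ` colour_cycle ?m i b = ?ea ` colour_cycle ?m i b'" "i \<in> A" "b \<in> ?Bl" "b' \<in> ?Bl"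
        for i b b'
      proof -
        have "colour_cycle ?m i b \<subseteq> ?Bl" "colour_cycle ?m i b' \<subseteq> ?Bl"
          using colour_cycle_black that(2-4) i_le by auto
        then show ?thesis using inj_on_image_eq_iff[OF inj_on_edge_at_black] that(1) by metis
      qed
      have vertex_cases: "(\<exists>b. z = Inl b \<and> b \<in> ?Bl) \<or>
          (\<exists>i b. z = Inr (i, colour_cycle ?m i b) \<and> i \<in> A \<and> b \<in> ?Bl)"
        if "z \<in> constellation_vertices A V ?m blk" for z
        using that unfolding constellation_vertices_def by auto
      show "x = y"
      proof (cases x)
        case (Inl b)
        then obtain b' where "y = Inl b'" "b \<in> ?Bl" "b' \<in> ?Bl"
          using vertex_cases[OF x] vertex_cases[OF y] hxy unfolding h_def by auto
        then show ?thesis using Inl hxy inj_onD[OF inj_on_edge_at_black] unfolding h_def by simp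
      next
        case (Inr p)
        then obtain i b i' b' where "x = Inr (i, colour_cycle ?m i b)" "y = Inr (i', colour_cycle ?m i' b')"
          "i \<in> A" "b \<in> ?Bl" "b' \<in> ?Bl"
          using vertex_cases[OF x] vertex_cases[OF y] hxy unfolding h_def by auto
        moreover from this have "i = i'" "?ea ` colour_cycle ?m i b = ?ea ` colour_cycle ?m i b'"
          using hxy unfolding h_def by auto
        ultimately show ?thesis using cycle_inj by simp
      qed
    qed
    show "inj_on g (constellation_edges A V blk)"
      using inj_on_edge_at_black unfolding g_def constellation_edges_def inj_on_def by auto
    show "h ` constellation_vertices A V ?m blk \<subseteq> psiV_hat q c E ends col blk"
    proof
      fix y assume "y \<in> h ` constellation_vertices A V ?m blk"
      then consider b where "b \<in> ?Bl" "y = Inl (?ea b)"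
        | i b where "i \<in> A" "b \<in> ?Bl" "y = Inr (i, psi_cycle E ends col blk i (?ea b))"
        unfolding constellation_vertices_def using h_cycle unfolding h_def by auto
      then show "y \<in> psiV_hat q c E ends col blk"
      proof cases
        case (1 b)
        then show ?thesis using ea \<open>c \<noteq> 0\<close> by (auto simp: psiV_hat_def psiV_def)
      next
        case (2 i b)
        then have "y \<in> psiV q E ends col blk"
          using ea A unfolding psiV_def by (intro UnI2 CollectI exI[of _ i] exI[of _ "?ea b"]) auto
        then show ?thesis using 2 A by (auto simp: psiV_hat_def)
      qed
    qed
    show "g ` constellation_edges A V blk \<subseteq> psiE_hat q c E col"
      using ea A unfolding g_def constellation_edges_def psiE_hat_def psiE_def by auto
    show "\<forall>e\<in>constellation_edges A V blk. psi_ends E ends col blk (g e) = h ` constellation_ends ?m e"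
      using h_cycle unfolding constellation_edges_def constellation_ends_def psi_ends_def g_def by (auto simp: h_def)
  qed
  moreover have "\<forall>e\<in>psiE_hat q c E col. psi_ends E ends col blk e \<subseteq> psiV_hat q c E ends col blk"
    using \<open>c \<noteq> 0\<close> unfolding psiE_hat_def psiE_def psi_ends_def psiV_hat_def psiV_def by auto
  ultimately show False using has_cycle_imp_not_all_components_trees trees by metis
qed

end

theorem mainTheorem14:
  fixes q c :: nat and V :: "'v set" and E :: "'e set" and ends :: "'e \<Rightarrow> 'v set"
    and col :: "'e \<Rightarrow> nat" and r :: 'e and ro :: 'v and blk :: "'v \<Rightarrow> bool"
  assumes "q \<ge> 3"
    and "rooted_bipartite_colored_graph q V E ends col r ro blk"
    and "c \<in> {1..q}"
    and "all_components_trees (psiV_hat q c E ends col blk) (psiE_hat q c E col) (psi_ends E ends col blk)"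
  shows "\<forall>v\<in>V. melonic ({1..q} - {c})
           (component V {e \<in> E. col e \<noteq> 0 \<and> col e \<noteq> c} ends v)
           (edges_within {e \<in> E. col e \<noteq> 0 \<and> col e \<noteq> c} ends
              (component V {e \<in> E. col e \<noteq> 0 \<and> col e \<noteq> c} ends v))
           ends col"
proof
  fix v assume v: "v \<in> V"
  let ?A = "{1..q} - {c}" and ?m = "other_end E ends col"
  let ?W = "residue ?A V ?m v"
  have cg: "colored_graph q V E ends col" and bip: "\<forall>e\<in>E. \<exists>b w. ends e = {b, w} \<and> blk b \<and> \<not> blk w"
    using assms(2) unfolding rooted_bipartite_colored_graph_def by auto
  have A: "?A \<subseteq> {..q}" by auto
  have colours: "{e \<in> E. col e \<noteq> 0 \<and> col e \<noteq> c} = {e \<in> E. col e \<in> ?A}"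
    using cg unfolding colored_graph_def by auto
  have ms: "matching_system ?A V ?m blk"
    using matching_system_other_end[OF cg bip, of ?A] assms(1,3) by (simp add: card_Diff_singleton)
  have acyclic: "constellation_acyclic ?A V ?m blk"
    using constellation_acyclic_if_trees[OF cg bip _ _ assms(4)] assms(3) by simp
  have "melonic ?A ?W (residue_edges ?A ?m ?W) snd fst" by (rule residue_melonic[OF ms acyclic v])
  moreover have "colored_iso ?W (edges_within {e \<in> E. col e \<in> ?A} ends ?W) ends col
      ?W (residue_edges ?A ?m ?W) snd fst"
    using colored_iso_residue_edges[OF cg A] residue_subset[OF ms v] residue_closed[OF ms v] by simp
  ultimately show "melonic ?A (component V {e \<in> E. col e \<noteq> 0 \<and> col e \<noteq> c} ends v)
      (edges_within {e \<in> E. col e \<noteq> 0 \<and> col e \<noteq> c} ends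
        (component V {e \<in> E. col e \<noteq> 0 \<and> col e \<noteq> c} ends v)) ends col"
    unfolding colours component_eq_residue[OF cg A v] by (rule melonic_colored_iso[rotated])
qed

end
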